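(* Let $g:[a,b]\to\mathbb R$ be a derivator. Then ${\rm P}_g$ is dense in $\mathrm{UC}_g([a,b])$ if and only if, for every $x\in D_g$, the indicator function $1_{\{x\}}$ (equal to $1$ at $x$ and $0$ elsewhere) belongs to the closure of ${\rm P}_g$ in $L^2_g([a,b])$.
   Context: $\mathbb F\in\{\mathbb R,\mathbb C\}$. A derivator is a nondecreasing, left-continuous $g:[a,b]\to\mathbb R$; $\mu_g$ is its Lebesgue–Stieltjes measure ($\mu_g([c,d))=g(d)-g(c)$). For $x\in[a,b)$, $\Delta g(x)=g(x^+)-g(x)$ and $D_g=\{x\in[a,b):\Delta g(x)>0\}$. For $x_0\in[a,b]$, the $g$-monomials centered at $x_0$ are $g_{x_0,0}\equiv1$, $g_{x_0,n}(x)=n\int_{[x_0,x)}g_{x_0,n-1}\,d\mu_g$ for $x\ge x_0$ and $g_{x_0,n}(x)=-n\int_{[x,x_0)}g_{x_0,n-1}\,d\mu_g$ for $x<x_0$. ${\rm P}_g$ is the space of finite $\mathbb F$-linear combinations of $g$-monomials. $L^2_g([a,b])$ is the Hilbert space of $\mu_g$-measurable $f$ with $\int_{[a,b)}|f|^2d\mu_g<\infty$. $\mathrm{UC}_g([a,b])$ is the Banach space (supremum norm) of uniformly $g$-continuous functions: for every $\varepsilon>0$ there is $\delta>0$ with $|g(x)-g(y)|<\delta\Rightarrow|f(x)-f(y)|<\varepsilon$ for all $x,y\in[a,b]$. *)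

theory Defs
  imports "HOL-Analysis.Analysis"
begin

definition derivator :: "real \<Rightarrow> real \<Rightarrow> (real \<Rightarrow> real) \<Rightarrow> bool" where
  "derivator a b g \<longleftrightarrow> mono_on {a..b} g \<and>
     (\<forall>x\<in>{a<..b}. (g \<longlongrightarrow> g x) (at_left x))"

text \<open>Extension of g outside [a,b] by constants (so that the measure lives on [a,b)).\<close>
definition gext :: "real \<Rightarrow> real \<Rightarrow> (real \<Rightarrow> real) \<Rightarrow> real \<Rightarrow> real" where
  "gext a b g x = g (max a (min b x))"

definition LS_measure :: "real \<Rightarrow> real \<Rightarrow> (real \<Rightarrow> real) \<Rightarrow> real measure" where
  "LS_measure a b g =
     extend_measure UNIV {(c, d). c \<le> d} (\<lambda>(c, d). {c..<d})
       (\<lambda>(c, d). ennreal (gext a b g d - gext a b g c))"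

fun gmono :: "real \<Rightarrow> real \<Rightarrow> (real \<Rightarrow> real) \<Rightarrow> real \<Rightarrow> nat \<Rightarrow> real \<Rightarrow> real" where
  "gmono a b g x0 0 = (\<lambda>x. 1)"
| "gmono a b g x0 (Suc n) = (\<lambda>x.
     if x0 \<le> x then real (Suc n) * set_lebesgue_integral (LS_measure a b g) {x0..<x} (gmono a b g x0 n)
     else - (real (Suc n) * set_lebesgue_integral (LS_measure a b g) {x..<x0} (gmono a b g x0 n)))"

definition Pg :: "real \<Rightarrow> real \<Rightarrow> (real \<Rightarrow> real) \<Rightarrow> (real \<Rightarrow> 'f::real_normed_field) set" where
  "Pg a b g = {p. \<exists>S c. finite S \<and> S \<subseteq> {a..b} \<times> UNIV \<and>
      p = (\<lambda>x. \<Sum>(x0, n)\<in>S. c (x0, n) * of_real (gmono a b g x0 n x))}"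

definition UCg :: "real \<Rightarrow> real \<Rightarrow> (real \<Rightarrow> real) \<Rightarrow> (real \<Rightarrow> 'f::real_normed_field) set" where
  "UCg a b g = {f. \<forall>\<epsilon>>0. \<exists>\<delta>>0. \<forall>x\<in>{a..b}. \<forall>y\<in>{a..b}.
      \<bar>g x - g y\<bar> < \<delta> \<longrightarrow> norm (f x - f y) < \<epsilon>}"

definition Pg_dense_UCg :: "real \<Rightarrow> real \<Rightarrow> (real \<Rightarrow> real) \<Rightarrow> 'f::real_normed_field itself \<Rightarrow> bool" where
  "Pg_dense_UCg a b g (TYPE('f)) \<longleftrightarrow>
     (\<forall>f \<in> (UCg a b g :: (real \<Rightarrow> 'f) set). \<forall>\<epsilon>>0. \<exists>p \<in> (Pg a b g :: (real \<Rightarrow> 'f) set).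
        (SUP x\<in>{a..b}. ereal (norm (f x - p x))) < ereal \<epsilon>)"

definition jump :: "(real \<Rightarrow> real) \<Rightarrow> real \<Rightarrow> real" where
  "jump g x = Lim (at_right x) g - g x"

definition Dg :: "real \<Rightarrow> real \<Rightarrow> (real \<Rightarrow> real) \<Rightarrow> real set" where
  "Dg a b g = {x \<in> {a..<b}. jump g x > 0}"

definition in_L2_closure_Pg :: "real \<Rightarrow> real \<Rightarrow> (real \<Rightarrow> real) \<Rightarrow> (real \<Rightarrow> 'f::real_normed_field) \<Rightarrow> bool" where
  "in_L2_closure_Pg a b g f \<longleftrightarrow>
     (\<forall>\<epsilon>>0. \<exists>p \<in> Pg a b g.
        (\<integral>\<^sup>+ x. ennreal ((norm (f x - p x))\<^sup>2 * indicator {a..<b} x) \<partial>LS_measure a b g) < ennreal \<epsilon>)"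

end

theory Submission
  imports Defs "HOL-Probability.Distribution_Functions"
begin

text \<open>Write \<open>\<mu>\<close> for the Lebesgue--Stieltjes measure of \<open>g\<close>, so that \<open>\<mu>[a,x) = g x - g a\<close> on \<open>[a,b]\<close>.

  If the indicators of the atoms of \<open>\<mu>\<close> lie in the \<open>L\<^sup>2\<close>-closure of \<open>P\<^sub>g\<close>, then every power of
  \<open>x \<mapsto> \<mu>[a,x)\<close> is a uniform limit of elements of \<open>P\<^sub>g\<close>. Indeed, \<open>P\<^sub>g\<close> is stable under the primitive
  \<open>h \<mapsto> \<integral>\<^bsub>[a,x)\<^esub> h d\<mu>\<close> (the primitive of a \<open>g\<close>-monomial is the next one), this primitive turns
  \<open>L\<^sup>2\<close>-limits into uniform limits, and integration by parts writes \<open>\<mu>[a,x)\<^sup>n\<^sup>+\<^sup>1\<close> as the primitive of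
  a density which differs from \<open>(n+1) \<mu>[a,y)\<^sup>n\<close> only at atoms \<open>y\<close>, by at most \<open>C \<mu>{y}\<close>. Such a
  difference is an \<open>L\<^sup>2\<close>-limit of finite combinations of atom indicators, because only finitely many
  atoms have mass \<open>\<ge> \<eta>\<close>. A uniformly \<open>g\<close>-continuous function is a uniformly continuous function of
  \<open>\<mu>[a,x)\<close>, so the Weierstrass theorem gives density.

  Conversely, for an atom \<open>x\<close>, the tent which is \<open>1\<close> at \<open>x\<close>, vanishes right of \<open>x\<close> and decreases
  linearly in \<open>g\<close> to the left is uniformly \<open>g\<close>-continuous thanks to the jump of \<open>g\<close> at \<open>x\<close>. Uniform
  approximants of the tent are \<open>L\<^sup>2\<close>-close to the indicator of \<open>{x}\<close>, since the set where the
  tent lies strictly between \<open>0\<close> and \<open>1\<close> has measure at most its width \<open>\<eta>\<close>.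

  Complex-valued functions are handled through their real and imaginary parts.\<close>

definition bounded_borel :: "(real \<Rightarrow> real) \<Rightarrow> bool" where
  "bounded_borel q \<longleftrightarrow> q \<in> borel_measurable borel \<and> (\<exists>B. \<forall>x. \<bar>q x\<bar> \<le> B)"

lemma bounded_borelI:
  "q \<in> borel_measurable borel \<Longrightarrow> (\<And>x. \<bar>q x\<bar> \<le> B) \<Longrightarrow> bounded_borel q"
  unfolding bounded_borel_def by blast

lemma bounded_borelE:
  assumes "bounded_borel q"
  obtains B where "q \<in> borel_measurable borel" "\<And>x. \<bar>q x\<bar> \<le> B"
  using assms unfolding bounded_borel_def by blast

lemma bounded_borel_const [simp]: "bounded_borel (\<lambda>x. k)"
  by (rule bounded_borelI[of _ "\<bar>k\<bar>"]) auto

lemma bounded_borel_indicator: "A \<in> sets borel \<Longrightarrow> bounded_borel (indicator A)"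
  by (rule bounded_borelI[of _ 1]) (auto simp: indicator_def)

lemma bounded_borel_monoI: "mono q \<Longrightarrow> (\<And>x. \<bar>q x\<bar> \<le> B) \<Longrightarrow> bounded_borel q"
  by (intro bounded_borelI borel_measurable_mono)

lemma bounded_borel_add:
  assumes "bounded_borel q1" "bounded_borel q2"
  shows "bounded_borel (\<lambda>x. q1 x + q2 x)"
proof -
  obtain B1 B2 where "q1 \<in> borel_measurable borel" "\<And>x. \<bar>q1 x\<bar> \<le> B1"
    "q2 \<in> borel_measurable borel" "\<And>x. \<bar>q2 x\<bar> \<le> B2"
    using assms by (metis bounded_borelE)
  then show ?thesis
    by (intro bounded_borelI[of _ "B1 + B2"]) (auto intro: abs_triangle_ineq[THEN order_trans] add_mono)
qed

lemma bounded_borel_mult: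
  assumes "bounded_borel q1" "bounded_borel q2"
  shows "bounded_borel (\<lambda>x. q1 x * q2 x)"
proof -
  obtain B1 B2 where q1: "q1 \<in> borel_measurable borel" "\<And>x. \<bar>q1 x\<bar> \<le> B1"
    and q2: "q2 \<in> borel_measurable borel" "\<And>x. \<bar>q2 x\<bar> \<le> B2"
    using assms by (metis bounded_borelE)
  have "\<bar>q1 x * q2 x\<bar> \<le> B1 * B2" for x
    unfolding abs_mult using q1(2)[of x] q2(2)[of x] q1(2)[of 0] by (intro mult_mono) auto
  with q1(1) q2(1) show ?thesis by (intro bounded_borelI) auto
qed

lemma bounded_borel_cmult: "bounded_borel q \<Longrightarrow> bounded_borel (\<lambda>x. k * q x)"
  using bounded_borel_mult[of "\<lambda>x. k" q] by simp

lemma bounded_borel_diff: "bounded_borel q1 \<Longrightarrow> bounded_borel q2 \<Longrightarrow> bounded_borel (\<lambda>x. q1 x - q2 x)"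
  using bounded_borel_add[of q1 "\<lambda>x. -1 * q2 x"] bounded_borel_cmult[of q2 "-1"] by simp

lemma bounded_borel_sum:
  "finite S \<Longrightarrow> (\<And>i. i \<in> S \<Longrightarrow> bounded_borel (q i)) \<Longrightarrow> bounded_borel (\<lambda>x. \<Sum>i\<in>S. q i x)"
  by (induction S rule: finite_induct) (auto intro: bounded_borel_add)

lemma bounded_borel_power: "bounded_borel q \<Longrightarrow> bounded_borel (\<lambda>x. q x ^ n)"
  by (induction n) (auto intro: bounded_borel_mult)

section \<open>Measures from left-continuous distribution functions\<close>

lemma sets_extend_measure_Ico:
  "sets (extend_measure UNIV {(c, d). c \<le> d} (\<lambda>(c, d). {c..<d}) \<mu>) = sets (borel :: real measure)"
  by (simp add: sets_extend_measure borel_eq_atLeastLessThan image_def split: prod.split)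
     (metis atLeastLessThan_empty nle_le)

text \<open>\<open>interval_measure\<close> needs a right-continuous function and measures intervals \<open>{c<..d}\<close>;
  reflecting the line turns the left-continuous \<open>F\<close> and the intervals \<open>{c..<d}\<close> into that setting.\<close>

lemma emeasure_extend_measure_Ico:
  fixes F :: "real \<Rightarrow> real"
  assumes mono: "mono F" and left_cont: "\<And>x. (F \<longlongrightarrow> F x) (at_left x)" and "c \<le> d"
  shows "emeasure (extend_measure UNIV {(c, d). c \<le> d} (\<lambda>(c, d). {c..<d}) (\<lambda>(c, d). ennreal (F d - F c)))
      {c..<d} = F d - F c" (is "emeasure ?N _ = _")
proof (rule emeasure_extend_measure_Pair[OF refl])
  define R where "R = distr (interval_measure (\<lambda>x. - F (- x))) borel uminus"
  have right_cont: "continuous (at_right x) (\<lambda>x. - F (- x))" for x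
  proof -
    have "((\<lambda>y. F (- y)) \<longlongrightarrow> F (- x)) (at_right x)"
      using left_cont[of "- x"] by (simp add: at_left_minus filterlim_filtermap)
    then show ?thesis by (simp add: continuous_within tendsto_minus)
  qed
  show "emeasure R {c..<d} = F d - F c" if "c \<le> d" for c d
  proof -
    have "uminus -` {c..<d} = {- d<..- c}"
      by auto
    then have "emeasure R {c..<d} = emeasure (interval_measure (\<lambda>x. - F (- x))) {- d<..- c}"
      unfolding R_def by (subst emeasure_distr) simp_all
    also have "\<dots> = F d - F c"
      using that right_cont mono by (subst emeasure_interval_measure_Ioc) (auto simp: mono_def)
    finally show ?thesis .
  qed
  have "sets ?N = sets R"
    unfolding sets_extend_measure_Ico by (simp add: R_def)
  then show "positive (sets ?N) (emeasure R)" "countably_additive (sets ?N) (emeasure R)"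
    using emeasure_positive[of R] emeasure_countably_additive[of R] by simp_all
qed (use \<open>c \<le> d\<close> in auto)

section \<open>Finite Borel measures on the real line\<close>

definition oriented_integral :: "real measure \<Rightarrow> real \<Rightarrow> (real \<Rightarrow> real) \<Rightarrow> real \<Rightarrow> real" where
  "oriented_integral N c q x =
     (if c \<le> x then set_lebesgue_integral N {c..<x} q else - set_lebesgue_integral N {x..<c} q)"

context finite_borel_measure
begin

lemma borel_measurable_M: "q \<in> borel_measurable borel \<Longrightarrow> q \<in> borel_measurable M"
  by (subst measurable_cong_sets[OF M_is_borel refl])

lemma integrable_bounded_borel:
  assumes "bounded_borel q"
  shows "integrable M q"
proof -
  obtain B where "q \<in> borel_measurable borel" "\<And>x. \<bar>q x\<bar> \<le> B"
    using assms by (meson bounded_borelE)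
  then show ?thesis
    by (intro integrable_const_bound[where B=B]) (auto simp: borel_measurable_M)
qed

lemma set_integrable_bounded_borel: "bounded_borel q \<Longrightarrow> A \<in> sets borel \<Longrightarrow> set_integrable M A q"
  unfolding set_integrable_def by (intro integrable_mult_indicator integrable_bounded_borel) auto

lemma oriented_integral_eq_diff:
  assumes q: "bounded_borel q"
  shows "oriented_integral M c q x = set_lebesgue_integral M {..<x} q - set_lebesgue_integral M {..<c} q"
proof -
  have split: "set_lebesgue_integral M {..<v} q = set_lebesgue_integral M {..<u} q + set_lebesgue_integral M {u..<v} q"
    if "u \<le> v" for u v
  proof -
    have "set_lebesgue_integral M ({..<u} \<union> {u..<v}) q =
        set_lebesgue_integral M {..<u} q + set_lebesgue_integral M {u..<v} q"
      by (rule set_integral_Un) (auto intro: set_integrable_bounded_borel[OF q])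
    moreover have "{..<u} \<union> {u..<v} = {..<v}"
      using that by auto
    ultimately show ?thesis
      by simp
  qed
  show ?thesis
  proof (cases "c \<le> x")
    case True
    then show ?thesis using split[of c x] by (simp add: oriented_integral_def)
  next
    case False
    then show ?thesis using split[of x c] by (simp add: oriented_integral_def)
  qed
qed

lemma oriented_integral_forward: "c \<le> x \<Longrightarrow> oriented_integral M c q x = set_lebesgue_integral M {c..<x} q"
  by (simp add: oriented_integral_def)

lemma oriented_integral_split:
  "bounded_borel q \<Longrightarrow> oriented_integral M c q x = oriented_integral M c q y + oriented_integral M y q x"
  by (simp add: oriented_integral_eq_diff)

lemma oriented_integral_add:
  "bounded_borel q1 \<Longrightarrow> bounded_borel q2 \<Longrightarrow>
    oriented_integral M c (\<lambda>y. q1 y + q2 y) x = oriented_integral M c q1 x + oriented_integral M c q2 x"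
  by (simp add: oriented_integral_def set_integrable_bounded_borel)

lemma oriented_integral_diff:
  "bounded_borel q1 \<Longrightarrow> bounded_borel q2 \<Longrightarrow>
    oriented_integral M c (\<lambda>y. q1 y - q2 y) x = oriented_integral M c q1 x - oriented_integral M c q2 x"
  by (simp add: oriented_integral_def set_integrable_bounded_borel)

lemma oriented_integral_cmult: "oriented_integral M c (\<lambda>y. k * q y) x = k * oriented_integral M c q x"
  by (simp add: oriented_integral_def)

lemma oriented_integral_sum:
  "finite S \<Longrightarrow> (\<And>i. i \<in> S \<Longrightarrow> bounded_borel (q i)) \<Longrightarrow>
    oriented_integral M c (\<lambda>y. \<Sum>i\<in>S. q i y) x = (\<Sum>i\<in>S. oriented_integral M c (q i) x)"
proof (induction S rule: finite_induct)
  case empty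
  then show ?case by (simp add: oriented_integral_def set_lebesgue_integral_def)
next
  case (insert i S)
  then show ?case by (simp add: oriented_integral_add bounded_borel_sum)
qed

lemma oriented_integral_cong:
  "c \<le> x \<Longrightarrow> (\<And>y. y \<in> {c..<x} \<Longrightarrow> q1 y = q2 y) \<Longrightarrow> oriented_integral M c q1 x = oriented_integral M c q2 x"
  unfolding oriented_integral_def set_lebesgue_integral_def
  by (auto intro!: Bochner_Integration.integral_cong simp: indicator_def)

lemma mono_set_integral_lessThan:
  assumes q: "bounded_borel q" and nonneg: "\<And>y. 0 \<le> q y"
  shows "mono (\<lambda>x. set_lebesgue_integral M {..<x} q)"
proof (rule monoI)
  fix x x' :: real assume "x \<le> x'"
  then have "indicator {..<x} y * q y \<le> indicator {..<x'} y * q y" for y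
    using nonneg[of y] by (auto simp: indicator_def)
  then show "set_lebesgue_integral M {..<x} q \<le> set_lebesgue_integral M {..<x'} q"
    unfolding set_lebesgue_integral_def
    using set_integrable_bounded_borel[OF q, of "{..<x}"] set_integrable_bounded_borel[OF q, of "{..<x'}"]
    by (intro integral_mono) (auto simp: set_integrable_def)
qed

lemma borel_measurable_set_integral_lessThan:
  assumes q: "bounded_borel q"
  shows "(\<lambda>x. set_lebesgue_integral M {..<x} q) \<in> borel_measurable borel"
proof -
  obtain B where qB: "q \<in> borel_measurable borel" "\<And>x. \<bar>q x\<bar> \<le> B"
    using q by (meson bounded_borelE)
  have bound: "\<bar>max (q y) 0\<bar> \<le> B" "\<bar>max (- q y) 0\<bar> \<le> B" for y
    using qB(2)[of y] by auto
  have pos: "bounded_borel (\<lambda>y. max (q y) 0)"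
    using qB(1) bound(1) by (intro bounded_borelI[of _ B]) auto
  have neg: "bounded_borel (\<lambda>y. max (- q y) 0)"
    using qB(1) bound(2) by (intro bounded_borelI[of _ B]) auto
  have "set_lebesgue_integral M {..<x} q =
      set_lebesgue_integral M {..<x} (\<lambda>y. max (q y) 0) - set_lebesgue_integral M {..<x} (\<lambda>y. max (- q y) 0)"
    for x
  proof -
    have "set_lebesgue_integral M {..<x} q = set_lebesgue_integral M {..<x} (\<lambda>y. max (q y) 0 - max (- q y) 0)"
      by (rule arg_cong[where f="set_lebesgue_integral M {..<x}"]) (auto simp: max_def)
    also have "\<dots> =
        set_lebesgue_integral M {..<x} (\<lambda>y. max (q y) 0) - set_lebesgue_integral M {..<x} (\<lambda>y. max (- q y) 0)"
      by (rule set_integral_diff(2)) (auto intro: set_integrable_bounded_borel pos neg)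
    finally show ?thesis .
  qed
  then show ?thesis
    using mono_set_integral_lessThan[OF pos] mono_set_integral_lessThan[OF neg]
    by (simp add: borel_measurable_diff borel_measurable_mono)
qed

lemma bounded_borel_set_integral_lessThan:
  assumes q: "bounded_borel q"
  shows "bounded_borel (\<lambda>x. set_lebesgue_integral M {..<x} q)"
proof -
  obtain B where qB: "\<And>x. \<bar>q x\<bar> \<le> B"
    using q by (meson bounded_borelE)
  have "0 \<le> B"
    using qB[of 0] by (meson abs_ge_zero order_trans)
  have "norm (\<integral>y. indicator {..<x} y *\<^sub>R q y \<partial>M) \<le> (\<integral>y. B \<partial>M)" for x
    by (rule Bochner_Integration.integral_norm_bound_integral)
      (use qB \<open>0 \<le> B\<close> set_integrable_bounded_borel[OF q, of "{..<x}"] in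
        \<open>auto simp: set_integrable_def indicator_def\<close>)
  then have "\<bar>set_lebesgue_integral M {..<x} q\<bar> \<le> measure M (space M) * B" for x
    by (simp add: set_lebesgue_integral_def)
  with borel_measurable_set_integral_lessThan[OF q] show ?thesis
    by (rule bounded_borelI)
qed

lemma bounded_borel_oriented_integral:
  assumes q: "bounded_borel q"
  shows "bounded_borel (oriented_integral M c q)"
proof -
  have "oriented_integral M c q = (\<lambda>x. set_lebesgue_integral M {..<x} q - set_lebesgue_integral M {..<c} q)"
    by (intro ext oriented_integral_eq_diff q)
  then show ?thesis
    using bounded_borel_set_integral_lessThan[OF q] bounded_borel_const by (simp add: bounded_borel_diff)
qed

lemma measure_eq_Diff:
  "A \<in> sets borel \<Longrightarrow> B \<in> sets borel \<Longrightarrow> B \<subseteq> A \<Longrightarrow> C = A - B \<Longrightarrow> measure M C = measure M A - measure M B"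
  by (simp add: finite_measure_Diff M_is_borel)

lemma measure_Ico_eq_diff: "y \<le> x \<Longrightarrow> measure M {y..<x} = measure M {..<x} - measure M {..<y}"
  by (rule measure_eq_Diff) auto

lemma measure_Ioo_eq_diff: "s < x \<Longrightarrow> measure M {s<..<x} = measure M {..<x} - cdf M s"
  unfolding cdf_def2 by (rule measure_eq_Diff) auto

lemma tendsto_measure_lessThan_at_right: "((\<lambda>y. measure M {..<y}) \<longlongrightarrow> cdf M s) (at_right s)"
proof (rule tendsto_sandwich)
  show "\<forall>\<^sub>F y in at_right s. cdf M s \<le> measure M {..<y}"
    using eventually_at_right_less[of s] by eventually_elim (auto simp: cdf_def2 intro!: finite_measure_mono)
  show "\<forall>\<^sub>F y in at_right s. measure M {..<y} \<le> cdf M y"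
    by (auto simp: cdf_def2 intro!: always_eventually finite_measure_mono)
  show "(cdf M \<longlongrightarrow> cdf M s) (at_right s)"
    using cdf_is_right_cont[of s] by (simp add: continuous_within)
qed simp

lemma finite_atoms_ge:
  assumes "0 < \<eta>"
  shows "finite {s. \<eta> \<le> measure M {s}}" (is "finite ?E")
proof (rule ccontr)
  assume "infinite ?E"
  obtain n :: nat where n: "measure M (space M) / \<eta> < real n"
    using reals_Archimedean2 by blast
  obtain F where F: "finite F" "card F = n" "F \<subseteq> ?E"
    using infinite_arbitrarily_large[OF \<open>infinite ?E\<close>] by blast
  have "real n * \<eta> = (\<Sum>x\<in>F. \<eta>)"
    using F by simp
  also have "\<dots> \<le> (\<Sum>x\<in>F. measure M {x})"
    using F by (intro sum_mono) auto
  also have "\<dots> = measure M F"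
    using F by (intro measure_eq_sum_singleton[symmetric]) auto
  also have "\<dots> \<le> measure M (space M)"
    by (rule bounded_measure)
  finally show False
    using n assms by (simp add: field_simps)
qed

lemma measure_Ioo_le:
  assumes "s < x" and near: "\<And>y. s < y \<Longrightarrow> y < x \<Longrightarrow> measure M {y..<x} < \<eta>"
  shows "measure M {s<..<x} \<le> \<eta>"
proof -
  have "measure M {..<x} - \<eta> \<le> cdf M s"
  proof (rule tendsto_lowerbound[OF tendsto_measure_lessThan_at_right])
    show "\<forall>\<^sub>F y in at_right s. measure M {..<x} - \<eta> \<le> measure M {..<y}"
      unfolding eventually_at_right_field
    proof (intro exI[of _ x] conjI allI impI)
      fix y assume "s < y" "y < x"
      then show "measure M {..<x} - \<eta> \<le> measure M {..<y}"
        using near[of y] by (simp add: measure_Ico_eq_diff)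
    qed (rule \<open>s < x\<close>)
  qed simp
  then show ?thesis
    using \<open>s < x\<close> by (simp add: measure_Ioo_eq_diff)
qed

lemma upward_closed_subset_Ico:
  fixes E :: "real set"
  assumes "E \<noteq> {}" "E \<subseteq> {c..<x}" and up: "\<And>y z. y \<in> E \<Longrightarrow> y \<le> z \<Longrightarrow> z < x \<Longrightarrow> z \<in> E"
  obtains s where "s < x" "E = {s..<x} \<or> E = {s<..<x}"
proof -
  have bdd: "bdd_below E"
    using assms(2) by (intro bdd_belowI[of _ c]) auto
  define s where "s = Inf E"
  have E_sub: "E \<subseteq> {s..<x}"
    using assms(2) cInf_lower[OF _ bdd] unfolding s_def by auto
  then have "s < x"
    using \<open>E \<noteq> {}\<close> by fastforce
  have "{s<..<x} \<subseteq> E"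
  proof
    fix z assume "z \<in> {s<..<x}"
    then obtain y where "y \<in> E" "y < z"
      using cInf_less_iff[OF \<open>E \<noteq> {}\<close> bdd] unfolding s_def by auto
    with up \<open>z \<in> {s<..<x}\<close> show "z \<in> E"
      by auto
  qed
  have "E = {s..<x}" if "s \<in> E"
  proof
    show "{s..<x} \<subseteq> E"
    proof
      fix z assume "z \<in> {s..<x}"
      then have "z = s \<or> z \<in> {s<..<x}"
        by auto
      with that \<open>{s<..<x} \<subseteq> E\<close> show "z \<in> E"
        by blast
    qed
  qed (rule E_sub)
  moreover have "E = {s<..<x}" if "s \<notin> E"
  proof
    show "E \<subseteq> {s<..<x}"
    proof
      fix z assume "z \<in> E"
      with E_sub that have "z \<in> {s..<x}" "z \<noteq> s"
        by auto
      then show "z \<in> {s<..<x}"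
        by auto
    qed
  qed fact
  ultimately have "E = {s..<x} \<or> E = {s<..<x}"
    by blast
  with \<open>s < x\<close> show ?thesis
    by (rule that)
qed

lemma measure_near_left_le:
  assumes "0 < \<eta>"
  shows "measure M {y \<in> {c..<x}. measure M {y..<x} < \<eta>} \<le> \<eta>"
proof -
  define E where "E = {y \<in> {c..<x}. measure M {y..<x} < \<eta>}"
  have E_iff: "y \<in> E \<longleftrightarrow> c \<le> y \<and> y < x \<and> measure M {y..<x} < \<eta>" for y
    by (simp add: E_def)
  have up: "z \<in> E" if "y \<in> E" "y \<le> z" "z < x" for y z
  proof -
    have "measure M {z..<x} \<le> measure M {y..<x}"
      using that by (intro finite_measure_mono) (auto simp: M_is_borel)
    with that show ?thesis
      unfolding E_iff by linarith
  qed
  have "measure M E \<le> \<eta>"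
  proof (cases "E = {}")
    case True
    then show ?thesis using assms by simp
  next
    case False
    moreover have "E \<subseteq> {c..<x}"
      by (auto simp: E_iff)
    ultimately obtain s where "s < x" and shape: "E = {s..<x} \<or> E = {s<..<x}"
      using up by (rule upward_closed_subset_Ico)
    from shape show ?thesis
    proof
      assume "E = {s..<x}"
      with \<open>s < x\<close> show ?thesis
        using E_iff[of s] by simp
    next
      assume "E = {s<..<x}"
      moreover have "measure M {s<..<x} \<le> \<eta>"
        using \<open>s < x\<close> \<open>E = {s<..<x}\<close> by (intro measure_Ioo_le) (auto simp: E_iff)
      ultimately show ?thesis
        by simp
    qed
  qed
  then show ?thesis
    by (simp add: E_def)
qed

lemma sets_near_left: "{y \<in> {c..<x}. measure M {y..<x} < \<eta>} \<in> sets borel"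
proof -
  have "(\<lambda>y. measure M {..<y}) \<in> borel_measurable borel"
    by (rule borel_measurable_mono) (auto simp: mono_def intro!: finite_measure_mono)
  moreover have "{y \<in> {c..<x}. measure M {y..<x} < \<eta>} =
      {c..<x} \<inter> {y \<in> space borel. measure M {..<x} - \<eta> < measure M {..<y}}"
    by (auto simp: measure_Ico_eq_diff)
  ultimately show ?thesis
    unfolding borel_measurable_iff_greater by auto
qed

lemma bounded_borel_measure_Ico: "bounded_borel (\<lambda>y. measure M {c..<y})"
  by (rule bounded_borel_monoI[of _ "measure M (space M)"])
    (auto simp: mono_def borel_UNIV intro!: finite_measure_mono)

lemma bounded_borel_measure_Icc: "bounded_borel (\<lambda>y. measure M {c..y})"
  by (rule bounded_borel_monoI[of _ "measure M (space M)"])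
    (auto simp: mono_def borel_UNIV intro!: finite_measure_mono)

lemma measure_Icc_eq_Ico_plus_atom: "c \<le> y \<Longrightarrow> measure M {c..y} = measure M {c..<y} + measure M {y}"
proof -
  assume "c \<le> y"
  then have "{c..y} = {c..<y} \<union> {y}" by auto
  moreover have "measure M ({c..<y} \<union> {y}) = measure M {c..<y} + measure M {y}"
    by (rule finite_measure_Union) (auto simp: M_is_borel)
  ultimately show ?thesis
    by simp
qed

lemma set_integral_Ico_tails:
  assumes v: "bounded_borel v"
  shows "(LINT s:{c..<x}|M. LINT y:{s..<x}|M. v y) = (LINT y:{c..<x}|M. v y * measure M {c..y})"
proof -
  interpret pair_sigma_finite M M ..
  interpret product: finite_measure "M \<Otimes>\<^sub>M M"
    by (rule finite_measure_pair_measure) unfold_locales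
  obtain B where vB: "v \<in> borel_measurable borel" "\<And>y. \<bar>v y\<bar> \<le> B"
    using v by (meson bounded_borelE)
  note M_is_borel[measurable_cong] vB(1)[measurable]
  define F where "F s y = (if c \<le> s \<and> s \<le> y \<and> y < x then v y else 0)" for s y
  have "(\<lambda>(s, y). F s y) \<in> borel_measurable (M \<Otimes>\<^sub>M M)"
    unfolding F_def by measurable
  moreover have "\<bar>F s y\<bar> \<le> B" for s y
    using vB(2)[of y] vB(2)[of 0] by (auto simp: F_def)
  ultimately have "integrable (M \<Otimes>\<^sub>M M) (\<lambda>(s, y). F s y)"
    by (intro product.integrable_const_bound[where B=B]) auto
  then have "(\<integral>s. \<integral>y. F s y \<partial>M \<partial>M) = (\<integral>y. \<integral>s. F s y \<partial>M \<partial>M)"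
    by (rule Fubini_integral[symmetric])
  moreover have "(\<integral>y. F s y \<partial>M) = indicator {c..<x} s * (LINT y:{s..<x}|M. v y)" for s
    unfolding set_lebesgue_integral_def
    by (subst integral_mult_right_zero[symmetric], intro Bochner_Integration.integral_cong)
      (auto simp: F_def indicator_def)
  moreover have "(\<integral>s. F s y \<partial>M) = indicator {c..<x} y * (v y * measure M {c..y})" for y
  proof -
    have "(\<integral>s. F s y \<partial>M) = (\<integral>s. indicator {c..y} s * (indicator {c..<x} y * v y) \<partial>M)"
      by (intro Bochner_Integration.integral_cong) (auto simp: F_def indicator_def)
    then show ?thesis
      by (simp add: mult_ac)
  qed
  ultimately show ?thesis
    by (simp add: set_lebesgue_integral_def)
qed

lemma oriented_integral_by_parts:
  assumes v: "bounded_borel v" and "c \<le> x"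
  shows "measure M {c..<x} * oriented_integral M c v x =
    oriented_integral M c (\<lambda>y. oriented_integral M c v y + v y * measure M {c..y}) x"
proof -
  define J where "J = oriented_integral M c v"
  have J: "bounded_borel J"
    unfolding J_def by (rule bounded_borel_oriented_integral[OF v])
  have tail: "J x - J s = (LINT y:{s..<x}|M. v y)" if "s \<in> {c..<x}" for s
    using that oriented_integral_split[OF v, of c x s] by (simp add: J_def oriented_integral_forward)
  have "measure M {c..<x} * J x = (LINT s:{c..<x}|M. J s + (J x - J s))"
    by (simp add: set_lebesgue_integral_def borel_UNIV)
  also have "\<dots> = (LINT s:{c..<x}|M. J s) + (LINT s:{c..<x}|M. J x - J s)"
    by (intro set_integral_add set_integrable_bounded_borel J bounded_borel_diff) auto
  also have "(LINT s:{c..<x}|M. J x - J s) = (LINT s:{c..<x}|M. LINT y:{s..<x}|M. v y)"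
    using tail by (intro set_lebesgue_integral_cong) auto
  also have "\<dots> = (LINT y:{c..<x}|M. v y * measure M {c..y})"
    by (rule set_integral_Ico_tails[OF v])
  also have "(LINT s:{c..<x}|M. J s) + \<dots> = (LINT y:{c..<x}|M. J y + v y * measure M {c..y})"
    by (intro set_integral_add(2)[symmetric] set_integrable_bounded_borel bounded_borel_mult J v
        bounded_borel_measure_Icc) auto
  finally show ?thesis
    using \<open>c \<le> x\<close> by (simp add: J_def oriented_integral_forward)
qed

text \<open>Integration by parts writes \<open>\<mu>[c,x)\<^sup>n\<^sup>+\<^sup>1\<close> as the oriented integral of \<open>pow_density c n\<close>,
  which differs from the formal derivative \<open>(n+1) \<mu>[c,y)\<^sup>n\<close> only at the atoms of \<open>\<mu>\<close>.\<close>

fun pow_density :: "real \<Rightarrow> nat \<Rightarrow> real \<Rightarrow> real" where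
  "pow_density c 0 = (\<lambda>y. 1)"
| "pow_density c (Suc n) = (\<lambda>y. measure M {c..<y} ^ Suc n + pow_density c n y * measure M {c..y})"

lemma bounded_borel_pow_density: "bounded_borel (pow_density c n)"
  by (induction n) (auto intro!: bounded_borel_add bounded_borel_mult bounded_borel_power
      bounded_borel_measure_Ico bounded_borel_measure_Icc)

lemma power_measure_Ico_eq_oriented_integral:
  "c \<le> x \<Longrightarrow> measure M {c..<x} ^ Suc n = oriented_integral M c (pow_density c n) x"
proof (induction n arbitrary: x)
  case 0
  then show ?case
    by (simp add: oriented_integral_forward set_lebesgue_integral_def M_is_borel)
next
  case (Suc n)
  have "measure M {c..<x} ^ Suc (Suc n) = measure M {c..<x} * oriented_integral M c (pow_density c n) x"
    using Suc by simp
  also have "\<dots> = oriented_integral M c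
      (\<lambda>y. oriented_integral M c (pow_density c n) y + pow_density c n y * measure M {c..y}) x"
    by (rule oriented_integral_by_parts[OF bounded_borel_pow_density Suc.prems])
  also have "\<dots> = oriented_integral M c (pow_density c (Suc n)) x"
    using Suc.IH by (intro oriented_integral_cong Suc.prems) auto
  finally show ?case .
qed

lemma pow_density_atom_bound:
  "\<exists>C\<ge>0. \<forall>y\<ge>c. \<bar>pow_density c n y - real (Suc n) * measure M {c..<y} ^ n\<bar> \<le> C * measure M {y}"
proof (induction n)
  case 0
  then show ?case by auto
next
  case (Suc n)
  then obtain C where C: "C \<ge> 0"
    "\<And>y. c \<le> y \<Longrightarrow> \<bar>pow_density c n y - real (Suc n) * measure M {c..<y} ^ n\<bar> \<le> C * measure M {y}"
    by blast
  define T where "T = measure M (space M)"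
  have T: "0 \<le> measure M A" "measure M A \<le> T" for A
    unfolding T_def by (auto intro: bounded_measure)
  have "\<bar>pow_density c (Suc n) y - real (Suc (Suc n)) * measure M {c..<y} ^ Suc n\<bar>
      \<le> (C * T + real (Suc n) * T ^ n) * measure M {y}" if "c \<le> y" for y
  proof -
    define d where "d = pow_density c n y - real (Suc n) * measure M {c..<y} ^ n"
    have "pow_density c (Suc n) y - real (Suc (Suc n)) * measure M {c..<y} ^ Suc n
        = d * measure M {c..y} + real (Suc n) * measure M {c..<y} ^ n * measure M {y}"
      using that by (simp add: d_def measure_Icc_eq_Ico_plus_atom algebra_simps)
    also have "\<bar>\<dots>\<bar> \<le> \<bar>d\<bar> * measure M {c..y} + real (Suc n) * measure M {c..<y} ^ n * measure M {y}"
      by (rule order_trans[OF abs_triangle_ineq]) (simp add: abs_mult)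
    also have "\<dots> \<le> (C * measure M {y}) * T + real (Suc n) * T ^ n * measure M {y}"
      using C(2)[OF that] T by (intro add_mono mult_mono power_mono mult_right_mono) (auto simp: d_def)
    finally show ?thesis
      by (simp add: algebra_simps)
  qed
  moreover have "0 \<le> C * T + real (Suc n) * T ^ n"
    using C(1) T[of "{}"] by simp
  ultimately show ?case
    by blast
qed

end

lemma PgI:
  "finite S \<Longrightarrow> S \<subseteq> {a..b} \<times> UNIV \<Longrightarrow>
    (\<lambda>x. \<Sum>i\<in>S. c i * of_real (gmono a b g (fst i) (snd i) x)) \<in> Pg a b g"
  unfolding Pg_def by (auto simp: case_prod_beta')

lemma PgE:
  assumes "p \<in> Pg a b g"
  obtains S c where "finite S" "S \<subseteq> {a..b} \<times> UNIV"
    "p = (\<lambda>x. \<Sum>i\<in>S. c i * of_real (gmono a b g (fst i) (snd i) x))"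
  using assms unfolding Pg_def by (auto simp: case_prod_beta')

lemma Pg_zero: "(\<lambda>x. 0) \<in> Pg a b g"
  using PgI[of "{}"] by simp

lemma Pg_monomial: "x0 \<in> {a..b} \<Longrightarrow> (\<lambda>x. k * of_real (gmono a b g x0 n x)) \<in> Pg a b g"
  using PgI[of "{(x0, n)}" a b "\<lambda>_. k"] by simp

lemma Pg_const: "a \<le> b \<Longrightarrow> (\<lambda>x. k) \<in> Pg a b g"
  using Pg_monomial[of a a b k g 0] by simp

lemma Pg_add:
  fixes p1 p2 :: "real \<Rightarrow> 'f::real_normed_field"
  assumes "p1 \<in> Pg a b g" "p2 \<in> Pg a b g"
  shows "(\<lambda>x. p1 x + p2 x) \<in> Pg a b g"
proof -
  obtain S1 c1 where S1: "finite S1" "S1 \<subseteq> {a..b} \<times> UNIV"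
    and p1: "p1 = (\<lambda>x. \<Sum>i\<in>S1. c1 i * of_real (gmono a b g (fst i) (snd i) x))"
    using assms(1) by (rule PgE)
  obtain S2 c2 where S2: "finite S2" "S2 \<subseteq> {a..b} \<times> UNIV"
    and p2: "p2 = (\<lambda>x. \<Sum>i\<in>S2. c2 i * of_real (gmono a b g (fst i) (snd i) x))"
    using assms(2) by (rule PgE)
  define m where "m i x = (of_real (gmono a b g (fst i) (snd i) x) :: 'f)" for i x
  define c where "c i = (if i \<in> S1 then c1 i else 0) + (if i \<in> S2 then c2 i else 0)" for i
  have extend: "(\<Sum>i\<in>S. d i * m i x) = (\<Sum>i\<in>S1 \<union> S2. (if i \<in> S then d i else 0) * m i x)"
    if "S \<subseteq> S1 \<union> S2" for S d x
    using that S1(1) S2(1) by (intro sum.mono_neutral_cong_left) auto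
  have "p1 x + p2 x = (\<Sum>i\<in>S1 \<union> S2. c i * m i x)" for x
    unfolding p1 p2 m_def[symmetric] extend[of S1 c1, OF Un_upper1] extend[of S2 c2, OF Un_upper2]
    by (simp add: c_def sum.distrib distrib_right)
  then show ?thesis
    using PgI[of "S1 \<union> S2" a b c g] S1 S2 by (simp add: m_def)
qed

lemma Pg_cmult:
  assumes "p \<in> Pg a b g"
  shows "(\<lambda>x. k * p x) \<in> Pg a b g"
proof -
  obtain S c where "finite S" "S \<subseteq> {a..b} \<times> UNIV"
    and p: "p = (\<lambda>x. \<Sum>i\<in>S. c i * of_real (gmono a b g (fst i) (snd i) x))"
    using assms by (rule PgE)
  then show ?thesis
    using PgI[of S a b "\<lambda>i. k * c i" g] by (simp add: sum_distrib_left mult.assoc)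
qed

lemma Pg_diff: "p1 \<in> Pg a b g \<Longrightarrow> p2 \<in> Pg a b g \<Longrightarrow> (\<lambda>x. p1 x - p2 x) \<in> Pg a b g"
  using Pg_add[of p1 a b g "\<lambda>x. -1 * p2 x"] Pg_cmult[of p2 a b g "-1"] by simp

lemma Pg_sum:
  "finite S \<Longrightarrow> (\<And>i. i \<in> S \<Longrightarrow> p i \<in> Pg a b g) \<Longrightarrow> (\<lambda>x. \<Sum>i\<in>S. p i x) \<in> Pg a b g"
  by (induction S rule: finite_induct) (auto intro: Pg_zero Pg_add)

lemma Pg_of_real:
  assumes "p \<in> (Pg a b g :: (real \<Rightarrow> real) set)"
  shows "(\<lambda>x. of_real (p x) :: 'f::real_normed_field) \<in> Pg a b g"
proof -
  obtain S c where "finite S" "S \<subseteq> {a..b} \<times> UNIV"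
    and p: "p = (\<lambda>x. \<Sum>i\<in>S. c i * of_real (gmono a b g (fst i) (snd i) x))"
    using assms by (rule PgE)
  then show ?thesis
    using PgI[of S a b "\<lambda>i. of_real (c i) :: 'f" g] by simp
qed

lemma Pg_Re:
  assumes "p \<in> (Pg a b g :: (real \<Rightarrow> complex) set)"
  shows "(\<lambda>x. Re (p x)) \<in> (Pg a b g :: (real \<Rightarrow> real) set)"
proof -
  obtain S c where "finite S" "S \<subseteq> {a..b} \<times> UNIV"
    and p: "p = (\<lambda>x. \<Sum>i\<in>S. c i * of_real (gmono a b g (fst i) (snd i) x))"
    using assms by (rule PgE)
  then show ?thesis
    using PgI[of S a b "\<lambda>i. Re (c i)" g] by simp
qed

definition in_unif_closure_Pg :: "real \<Rightarrow> real \<Rightarrow> (real \<Rightarrow> real) \<Rightarrow> (real \<Rightarrow> real) \<Rightarrow> bool" where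
  "in_unif_closure_Pg a b g h \<longleftrightarrow> (\<forall>\<epsilon>>0. \<exists>p\<in>Pg a b g. \<forall>x\<in>{a..b}. \<bar>h x - p x\<bar> < \<epsilon>)"

lemma in_unif_closure_Pg_Pg: "p \<in> Pg a b g \<Longrightarrow> in_unif_closure_Pg a b g p"
  unfolding in_unif_closure_Pg_def by force

lemma in_unif_closure_Pg_cong:
  "in_unif_closure_Pg a b g h \<Longrightarrow> (\<And>x. x \<in> {a..b} \<Longrightarrow> h x = h' x) \<Longrightarrow> in_unif_closure_Pg a b g h'"
  unfolding in_unif_closure_Pg_def by metis

lemma in_unif_closure_Pg_add:
  assumes h1: "in_unif_closure_Pg a b g h1" and h2: "in_unif_closure_Pg a b g h2"
  shows "in_unif_closure_Pg a b g (\<lambda>x. h1 x + h2 x)"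
  unfolding in_unif_closure_Pg_def
proof (intro allI impI)
  fix \<epsilon> :: real assume "0 < \<epsilon>"
  then have "0 < \<epsilon> / 2" by simp
  obtain p1 where p1: "p1 \<in> Pg a b g" "\<forall>x\<in>{a..b}. \<bar>h1 x - p1 x\<bar> < \<epsilon> / 2"
    using h1 \<open>0 < \<epsilon> / 2\<close> unfolding in_unif_closure_Pg_def by blast
  obtain p2 where p2: "p2 \<in> Pg a b g" "\<forall>x\<in>{a..b}. \<bar>h2 x - p2 x\<bar> < \<epsilon> / 2"
    using h2 \<open>0 < \<epsilon> / 2\<close> unfolding in_unif_closure_Pg_def by blast
  have "\<forall>x\<in>{a..b}. \<bar>h1 x + h2 x - (p1 x + p2 x)\<bar> < \<epsilon>"
  proof
    fix x assume "x \<in> {a..b}"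
    with p1(2) p2(2) have "\<bar>h1 x - p1 x\<bar> < \<epsilon> / 2" "\<bar>h2 x - p2 x\<bar> < \<epsilon> / 2"
      by blast+
    then show "\<bar>h1 x + h2 x - (p1 x + p2 x)\<bar> < \<epsilon>"
      by linarith
  qed
  then show "\<exists>p\<in>Pg a b g. \<forall>x\<in>{a..b}. \<bar>h1 x + h2 x - p x\<bar> < \<epsilon>"
    using Pg_add[OF p1(1) p2(1)] by (rule bexI)
qed

lemma in_unif_closure_Pg_cmult:
  assumes h: "in_unif_closure_Pg a b g h"
  shows "in_unif_closure_Pg a b g (\<lambda>x. k * h x)"
  unfolding in_unif_closure_Pg_def
proof (intro allI impI)
  fix \<epsilon> :: real assume "0 < \<epsilon>"
  then have "0 < \<epsilon> / (\<bar>k\<bar> + 1)"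
    by (simp add: add_nonneg_pos)
  then obtain p where p: "p \<in> Pg a b g" "\<forall>x\<in>{a..b}. \<bar>h x - p x\<bar> < \<epsilon> / (\<bar>k\<bar> + 1)"
    using h unfolding in_unif_closure_Pg_def by blast
  have "\<forall>x\<in>{a..b}. \<bar>k * h x - k * p x\<bar> < \<epsilon>"
  proof
    fix x assume x: "x \<in> {a..b}"
    have "\<bar>k * h x - k * p x\<bar> = \<bar>k\<bar> * \<bar>h x - p x\<bar>"
      by (simp add: abs_mult[symmetric] algebra_simps)
    also have "\<dots> \<le> (\<bar>k\<bar> + 1) * \<bar>h x - p x\<bar>"
      by (simp add: mult_right_mono)
    also have "\<dots> < \<epsilon>"
      using p(2) x by (simp add: field_simps)
    finally show "\<bar>k * h x - k * p x\<bar> < \<epsilon>" .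
  qed
  then show "\<exists>p\<in>Pg a b g. \<forall>x\<in>{a..b}. \<bar>k * h x - p x\<bar> < \<epsilon>"
    using Pg_cmult[OF p(1), of k] by (rule bexI)
qed

lemma in_unif_closure_Pg_sum:
  "finite S \<Longrightarrow> (\<And>i. i \<in> S \<Longrightarrow> in_unif_closure_Pg a b g (h i)) \<Longrightarrow>
    in_unif_closure_Pg a b g (\<lambda>x. \<Sum>i\<in>S. h i x)"
proof (induction S rule: finite_induct)
  case empty
  then show ?case using in_unif_closure_Pg_Pg[OF Pg_zero] by simp
next
  case (insert i S)
  then show ?case by (simp add: in_unif_closure_Pg_add)
qed

section \<open>The Lebesgue--Stieltjes measure of a derivator\<close>

lemma sets_LS_measure [measurable_cong]: "sets (LS_measure a b g) = sets borel"
  unfolding LS_measure_def by (rule sets_extend_measure_Ico)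

lemma space_LS_measure: "space (LS_measure a b g) = UNIV"
  unfolding LS_measure_def by (simp add: space_extend_measure)

locale derivator_setting =
  fixes a b :: real and g :: "real \<Rightarrow> real"
  assumes derivator: "derivator a b g" and le: "a \<le> b"
begin

abbreviation "G \<equiv> gext a b g"
abbreviation "M \<equiv> LS_measure a b g"

lemma g_mono: "x \<in> {a..b} \<Longrightarrow> y \<in> {a..b} \<Longrightarrow> x \<le> y \<Longrightarrow> g x \<le> g y"
  using derivator unfolding derivator_def mono_on_def by blast

lemma G_eq: "x \<in> {a..b} \<Longrightarrow> G x = g x"
  by (simp add: gext_def)

lemma G_below: "y \<le> a \<Longrightarrow> G y = g a"
  using le by (simp add: gext_def)

lemma G_above: "b \<le> y \<Longrightarrow> G y = g b"
  using le by (simp add: gext_def)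

lemma mono_G: "mono G"
  unfolding mono_def gext_def using le by (intro allI impI g_mono) auto

lemma G_left_cont: "(G \<longlongrightarrow> G x) (at_left x)"
proof -
  consider "x \<le> a" | "a < x" "x \<le> b" | "b < x"
    by linarith
  then show ?thesis
  proof cases
    case 1
    then have "\<forall>\<^sub>F y in at_left x. G y = G x"
      unfolding eventually_at_left_field by (intro exI[of _ "x - 1"]) (auto simp: G_below)
    then show ?thesis by (rule tendsto_eventually)
  next
    case 2
    then have "(g \<longlongrightarrow> G x) (at_left x)"
      using derivator by (simp add: derivator_def G_eq)
    moreover have "\<forall>\<^sub>F y in at_left x. g y = G y"
      unfolding eventually_at_left_field using 2 by (intro exI[of _ a]) (auto simp: G_eq)
    ultimately show ?thesis
      by (simp add: tendsto_cong)
  next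
    case 3
    then have "\<forall>\<^sub>F y in at_left x. G y = G x"
      unfolding eventually_at_left_field by (intro exI[of _ b]) (auto simp: G_above)
    then show ?thesis by (rule tendsto_eventually)
  qed
qed

lemma emeasure_Ico: "c \<le> d \<Longrightarrow> emeasure M {c..<d} = ennreal (G d - G c)"
  unfolding LS_measure_def by (rule emeasure_extend_measure_Ico[OF mono_G G_left_cont])

lemma emeasure_outside: "emeasure M (- {a..<b}) = 0"
proof -
  let ?N = "\<lambda>i::nat. {a - real i..<a} \<union> {b..<b + real i}"
  have "emeasure M (?N i) = 0" for i
  proof -
    have "emeasure M (?N i) \<le> emeasure M {a - real i..<a} + emeasure M {b..<b + real i}"
      by (intro emeasure_subadditive) (auto simp: sets_LS_measure)
    also have "\<dots> = 0"
      by (simp add: emeasure_Ico G_below G_above)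
    finally show ?thesis by simp
  qed
  then have "emeasure M (\<Union>i. ?N i) = 0"
    by (intro emeasure_UN_eq_0) (auto simp: sets_LS_measure)
  moreover have "- {a..<b} \<subseteq> (\<Union>i. ?N i)"
  proof
    fix x assume "x \<in> - {a..<b}"
    moreover obtain n :: nat where "\<bar>x\<bar> + \<bar>a\<bar> + \<bar>b\<bar> < real n"
      using reals_Archimedean2 by blast
    ultimately show "x \<in> (\<Union>i. ?N i)"
      by (intro UN_I[of n]) auto
  qed
  ultimately show ?thesis
    using emeasure_mono[of "- {a..<b}" "\<Union>i. ?N i" M] by (auto simp: sets_LS_measure)
qed

lemma emeasure_UNIV: "emeasure M UNIV = ennreal (g b - g a)"
proof -
  have "emeasure M UNIV = emeasure M {a..<b} + emeasure M (- {a..<b})"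
    by (subst plus_emeasure) (auto simp: sets_LS_measure)
  then show ?thesis
    using emeasure_outside le by (simp add: emeasure_Ico G_eq)
qed

lemma finite_measure_M: "finite_measure M"
  by (rule finite_measureI) (simp add: space_LS_measure emeasure_UNIV)

sublocale finite_borel_measure M
  by (intro finite_borel_measure.intro finite_measure_M finite_borel_measure_axioms.intro sets_LS_measure)

lemma measure_outside: "A \<in> sets borel \<Longrightarrow> A \<subseteq> - {a..<b} \<Longrightarrow> measure M A = 0"
  using emeasure_mono[of A "- {a..<b}" M] emeasure_outside by (simp add: measure_def M_is_borel)

lemma measure_Ico: "c \<le> d \<Longrightarrow> measure M {c..<d} = G d - G c"
  using emeasure_Ico[of c d] mono_G by (simp add: emeasure_eq_measure mono_def)

lemma measure_Ico_g: "y \<in> {a..b} \<Longrightarrow> x \<in> {a..b} \<Longrightarrow> y \<le> x \<Longrightarrow> measure M {y..<x} = g x - g y"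
  by (simp add: measure_Ico G_eq)

lemma measure_lessThan: "measure M {..<y} = G y - g a"
proof (cases "a \<le> y")
  case True
  have "measure M {..<y} = measure M ({..<a} \<union> {a..<y})"
    using True by (intro arg_cong[where f="measure M"]) auto
  also have "\<dots> = measure M {..<a} + measure M {a..<y}"
    by (rule finite_measure_Union) (auto simp: M_is_borel)
  also have "measure M {..<a} = 0"
    by (rule measure_outside) auto
  finally show ?thesis
    using True by (simp add: measure_Ico G_below)
next
  case False
  moreover have "measure M {..<y} = 0"
    using False by (intro measure_outside) auto
  ultimately show ?thesis
    by (simp add: G_below)
qed

lemma jump_eq_measure: "s \<in> {a..<b} \<Longrightarrow> jump g s = measure M {s}"
proof -
  assume s: "s \<in> {a..<b}"
  have "cdf M s = measure M ({..<s} \<union> {s})"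
    unfolding cdf_def2 by (intro arg_cong[where f="measure M"]) auto
  also have "\<dots> = measure M {..<s} + measure M {s}"
    by (rule finite_measure_Union) (auto simp: M_is_borel)
  finally have "((\<lambda>y. g a + measure M {..<y}) \<longlongrightarrow> g s + measure M {s}) (at_right s)"
    using s tendsto_add[OF tendsto_const tendsto_measure_lessThan_at_right, of "g a" s]
    by (simp add: measure_lessThan G_eq)
  moreover have "\<forall>\<^sub>F y in at_right s. g a + measure M {..<y} = g y"
    unfolding eventually_at_right_field using s
    by (intro exI[of _ b]) (auto simp: measure_lessThan G_eq)
  ultimately have "(g \<longlongrightarrow> g s + measure M {s}) (at_right s)"
    by (rule tendsto_cong[THEN iffD1, rotated])
  then have "Lim (at_right s) g = g s + measure M {s}"
    by (rule tendsto_Lim[OF trivial_limit_at_right_real])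
  then show ?thesis
    by (simp add: jump_def)
qed

lemma Dg_iff: "s \<in> Dg a b g \<longleftrightarrow> s \<in> {a..<b} \<and> 0 < measure M {s}"
proof -
  have "s \<in> {a..<b} \<Longrightarrow> 0 < jump g s \<longleftrightarrow> 0 < measure M {s}"
    by (simp add: jump_eq_measure)
  then show ?thesis
    unfolding Dg_def by blast
qed

end

section \<open>Approximation by \<open>P\<^sub>g\<close> in \<open>L\<^sup>2\<close> and uniformly\<close>

lemma exists_sq_mult_less:
  fixes \<epsilon> T :: real
  assumes "0 < \<epsilon>" "0 \<le> T"
  shows "\<exists>\<delta>>0. \<delta>\<^sup>2 * T < \<epsilon>"
proof -
  define \<delta> where "\<delta> = min 1 (\<epsilon> / (T + 1))"
  have "0 < \<delta>" "\<delta> \<le> 1"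
    using assms by (auto simp: \<delta>_def)
  then have "\<delta>\<^sup>2 \<le> \<delta>"
    by (simp add: power2_eq_square mult_left_le_one_le)
  also have "\<dots> \<le> \<epsilon> / (T + 1)"
    by (simp add: \<delta>_def)
  finally have "\<delta>\<^sup>2 * T \<le> \<epsilon> / (T + 1) * T"
    using assms(2) by (rule mult_right_mono)
  also have "\<dots> < \<epsilon>"
    using assms by (simp add: field_simps)
  finally show ?thesis
    using \<open>0 < \<delta>\<close> by blast
qed

context derivator_setting
begin

lemma gmono_Suc_eq: "gmono a b g x0 (Suc n) x = real (Suc n) * oriented_integral M x0 (gmono a b g x0 n) x"
  by (simp add: oriented_integral_def)

lemma bounded_borel_gmono: "bounded_borel (gmono a b g x0 n)"
proof (induction n)
  case 0
  then show ?case by simp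
next
  case (Suc n)
  have "gmono a b g x0 (Suc n) = (\<lambda>x. real (Suc n) * oriented_integral M x0 (gmono a b g x0 n) x)"
    by (rule ext) (rule gmono_Suc_eq)
  then show ?case
    using bounded_borel_cmult[OF bounded_borel_oriented_integral[OF Suc]] by simp
qed

lemma bounded_borel_Pg:
  assumes "p \<in> (Pg a b g :: (real \<Rightarrow> real) set)"
  shows "bounded_borel p"
proof -
  obtain S c where "finite S"
    and p: "p = (\<lambda>x. \<Sum>i\<in>S. c i * of_real (gmono a b g (fst i) (snd i) x))"
    using assms by (rule PgE)
  then show ?thesis
    by (auto intro!: bounded_borel_sum bounded_borel_cmult bounded_borel_gmono)
qed

lemma oriented_integral_gmono:
  "oriented_integral M c (gmono a b g x0 n) x =
    (gmono a b g x0 (Suc n) x - gmono a b g x0 (Suc n) c) / real (Suc n)"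
  using oriented_integral_split[OF bounded_borel_gmono[of x0 n], of x0 x c]
  by (simp add: gmono_Suc_eq field_simps del: gmono.simps)

lemma oriented_integral_Pg:
  assumes "p \<in> (Pg a b g :: (real \<Rightarrow> real) set)"
  shows "oriented_integral M a p \<in> Pg a b g"
proof -
  obtain S c where S: "finite S" "S \<subseteq> {a..b} \<times> UNIV"
    and p: "p = (\<lambda>x. \<Sum>i\<in>S. c i * of_real (gmono a b g (fst i) (snd i) x))"
    using assms by (rule PgE)
  define d where "d i = c i / real (Suc (snd i))" for i
  define m where "m i = gmono a b g (fst i) (Suc (snd i))" for i
  have eq: "oriented_integral M a p x = (\<Sum>i\<in>S. d i * m i x) - (\<Sum>i\<in>S. d i * m i a)" for x
  proof -
    have "oriented_integral M a p x =
        (\<Sum>i\<in>S. oriented_integral M a (\<lambda>y. c i * gmono a b g (fst i) (snd i) y) x)"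
      unfolding p of_real_eq_id id_def
      by (rule oriented_integral_sum[OF S(1)]) (auto intro!: bounded_borel_cmult bounded_borel_gmono)
    also have "\<dots> = (\<Sum>i\<in>S. d i * m i x - d i * m i a)"
      by (intro sum.cong refl) (simp del: gmono.simps add: oriented_integral_cmult
          oriented_integral_gmono d_def m_def diff_divide_distrib right_diff_distrib)
    finally show ?thesis
      by (simp add: sum_subtractf)
  qed
  moreover have "(\<lambda>x. (\<Sum>i\<in>S. d i * m i x) - (\<Sum>i\<in>S. d i * m i a)) \<in> Pg a b g"
  proof (rule Pg_diff)
    have "(\<lambda>x. k * gmono a b g x0 n x) \<in> (Pg a b g :: (real \<Rightarrow> real) set)" if "x0 \<in> {a..b}" for x0 k n
      using Pg_monomial[OF that, of k g n] by simp
    with S show "(\<lambda>x. \<Sum>i\<in>S. d i * m i x) \<in> Pg a b g"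
      unfolding m_def by (intro Pg_sum) (auto simp del: gmono.simps)
    show "(\<lambda>x. \<Sum>i\<in>S. d i * m i a) \<in> Pg a b g"
      using le by (rule Pg_const)
  qed
  moreover have "oriented_integral M a p = (\<lambda>x. (\<Sum>i\<in>S. d i * m i x) - (\<Sum>i\<in>S. d i * m i a))"
    by (rule ext) (rule eq)
  ultimately show ?thesis
    by simp
qed

definition sqnorm_L2 :: "(real \<Rightarrow> real) \<Rightarrow> real" where
  "sqnorm_L2 h = (\<integral>x. (h x)\<^sup>2 * indicator {a..<b} x \<partial>M)"

lemma integrable_sq_indicator: "bounded_borel h \<Longrightarrow> integrable M (\<lambda>x. (h x)\<^sup>2 * indicator {a..<b} x)"
  by (intro integrable_bounded_borel bounded_borel_mult bounded_borel_power bounded_borel_indicator) auto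

lemma sqnorm_L2_nonneg: "0 \<le> sqnorm_L2 h"
  unfolding sqnorm_L2_def by (rule Bochner_Integration.integral_nonneg) (simp add: indicator_def)

lemma in_L2_closure_iff:
  assumes "bounded_borel h"
  shows "in_L2_closure_Pg a b g h \<longleftrightarrow> (\<forall>\<epsilon>>0. \<exists>p\<in>Pg a b g. sqnorm_L2 (\<lambda>x. h x - p x) < \<epsilon>)"
proof -
  have "(\<integral>\<^sup>+ x. ennreal ((norm (h x - p x))\<^sup>2 * indicator {a..<b} x) \<partial>M) = ennreal (sqnorm_L2 (\<lambda>x. h x - p x))"
    if "p \<in> Pg a b g" for p
    unfolding sqnorm_L2_def real_norm_def power2_abs
    using assms bounded_borel_Pg[OF that]
    by (intro nn_integral_eq_integral integrable_sq_indicator bounded_borel_diff) (auto simp: indicator_def)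
  then show ?thesis
    unfolding in_L2_closure_Pg_def using sqnorm_L2_nonneg by (auto simp: ennreal_less_iff)
qed

lemma sqnorm_L2_le:
  assumes "bounded_borel u" "bounded_borel v" "\<And>x. x \<in> {a..<b} \<Longrightarrow> (u x)\<^sup>2 \<le> v x"
  shows "sqnorm_L2 u \<le> (\<integral>x. v x * indicator {a..<b} x \<partial>M)"
  unfolding sqnorm_L2_def
proof (rule integral_mono)
  show "integrable M (\<lambda>x. (u x)\<^sup>2 * indicator {a..<b} x)"
    by (rule integrable_sq_indicator[OF assms(1)])
  show "integrable M (\<lambda>x. v x * indicator {a..<b} x)"
    by (intro integrable_bounded_borel bounded_borel_mult bounded_borel_indicator assms(2)) auto
  show "(u x)\<^sup>2 * indicator {a..<b} x \<le> v x * indicator {a..<b} x" for x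
    using assms(3)[of x] by (auto simp: indicator_def)
qed

lemma sqnorm_L2_add_le:
  assumes u: "bounded_borel u" and v: "bounded_borel v"
  shows "sqnorm_L2 (\<lambda>x. u x + v x) \<le> 2 * sqnorm_L2 u + 2 * sqnorm_L2 v"
proof -
  have "sqnorm_L2 (\<lambda>x. u x + v x) \<le> (\<integral>x. (2 * (u x)\<^sup>2 + 2 * (v x)\<^sup>2) * indicator {a..<b} x \<partial>M)"
  proof (rule sqnorm_L2_le)
    show "bounded_borel (\<lambda>x. u x + v x)"
      using u v by (rule bounded_borel_add)
    show "bounded_borel (\<lambda>x. 2 * (u x)\<^sup>2 + 2 * (v x)\<^sup>2)"
      using u v by (intro bounded_borel_add bounded_borel_cmult bounded_borel_power)
    show "(u x + v x)\<^sup>2 \<le> 2 * (u x)\<^sup>2 + 2 * (v x)\<^sup>2" for x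
      using sum_squares_ge_zero[of "u x - v x" 0] by (simp add: power2_eq_square algebra_simps)
  qed
  also have "\<dots> = 2 * sqnorm_L2 u + 2 * sqnorm_L2 v"
    unfolding sqnorm_L2_def distrib_right mult.assoc
    using integrable_sq_indicator[OF u] integrable_sq_indicator[OF v] by simp
  finally show ?thesis .
qed

lemma sqnorm_L2_cmult: "sqnorm_L2 (\<lambda>x. k * u x) = k\<^sup>2 * sqnorm_L2 u"
  unfolding sqnorm_L2_def by (simp add: power_mult_distrib mult.assoc)

lemma sqnorm_L2_le_uniform:
  assumes u: "bounded_borel u" and d: "\<And>x. x \<in> {a..<b} \<Longrightarrow> \<bar>u x\<bar> \<le> \<delta>"
  shows "sqnorm_L2 u \<le> \<delta>\<^sup>2 * (g b - g a)"
proof -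
  have "sqnorm_L2 u \<le> (\<integral>x. \<delta>\<^sup>2 * indicator {a..<b} x \<partial>M)"
  proof (rule sqnorm_L2_le[OF u])
    show "(u x)\<^sup>2 \<le> \<delta>\<^sup>2" if "x \<in> {a..<b}" for x
      using d[OF that] by (metis abs_ge_zero power2_abs power_mono)
  qed simp
  also have "\<dots> = \<delta>\<^sup>2 * (g b - g a)"
    using le by (simp add: M_is_borel measure_Ico_g)
  finally show ?thesis .
qed

lemma in_L2_closure_Pg_Pg: "p \<in> Pg a b g \<Longrightarrow> in_L2_closure_Pg a b g p"
  unfolding in_L2_closure_Pg_def by (intro allI impI bexI[of _ p]) simp_all

lemma in_L2_closure_approx:
  assumes h: "bounded_borel h"
    and approx: "\<And>\<epsilon>. 0 < \<epsilon> \<Longrightarrow> \<exists>v. bounded_borel v \<and> in_L2_closure_Pg a b g v \<and> sqnorm_L2 (\<lambda>x. h x - v x) < \<epsilon>"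
  shows "in_L2_closure_Pg a b g h"
  unfolding in_L2_closure_iff[OF h]
proof (intro allI impI)
  fix \<epsilon> :: real assume "0 < \<epsilon>"
  then have "0 < \<epsilon> / 4" by simp
  then obtain v where v: "bounded_borel v" "in_L2_closure_Pg a b g v" "sqnorm_L2 (\<lambda>x. h x - v x) < \<epsilon> / 4"
    using approx by blast
  obtain p where p: "p \<in> Pg a b g" "sqnorm_L2 (\<lambda>x. v x - p x) < \<epsilon> / 4"
    using v(2) \<open>0 < \<epsilon> / 4\<close> unfolding in_L2_closure_iff[OF v(1)] by blast
  have "sqnorm_L2 (\<lambda>x. h x - p x) = sqnorm_L2 (\<lambda>x. (h x - v x) + (v x - p x))"
    by simp
  also have "\<dots> \<le> 2 * sqnorm_L2 (\<lambda>x. h x - v x) + 2 * sqnorm_L2 (\<lambda>x. v x - p x)"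
    by (intro sqnorm_L2_add_le bounded_borel_diff h v bounded_borel_Pg p)
  also have "\<dots> < \<epsilon>"
    using p v by simp
  finally have "sqnorm_L2 (\<lambda>x. h x - p x) < \<epsilon>" .
  with p(1) show "\<exists>p\<in>Pg a b g. sqnorm_L2 (\<lambda>x. h x - p x) < \<epsilon>"
    by (intro bexI[of _ p])
qed

lemma in_L2_closure_add:
  assumes h1: "bounded_borel h1" "in_L2_closure_Pg a b g h1"
    and h2: "bounded_borel h2" "in_L2_closure_Pg a b g h2"
  shows "in_L2_closure_Pg a b g (\<lambda>x. h1 x + h2 x)"
  unfolding in_L2_closure_iff[OF bounded_borel_add[OF h1(1) h2(1)]]
proof (intro allI impI)
  fix \<epsilon> :: real assume "0 < \<epsilon>"
  then have "0 < \<epsilon> / 4" by simp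
  obtain p1 where p1: "p1 \<in> Pg a b g" "sqnorm_L2 (\<lambda>x. h1 x - p1 x) < \<epsilon> / 4"
    using h1(2) \<open>0 < \<epsilon> / 4\<close> unfolding in_L2_closure_iff[OF h1(1)] by blast
  obtain p2 where p2: "p2 \<in> Pg a b g" "sqnorm_L2 (\<lambda>x. h2 x - p2 x) < \<epsilon> / 4"
    using h2(2) \<open>0 < \<epsilon> / 4\<close> unfolding in_L2_closure_iff[OF h2(1)] by blast
  have "sqnorm_L2 (\<lambda>x. h1 x + h2 x - (p1 x + p2 x)) = sqnorm_L2 (\<lambda>x. (h1 x - p1 x) + (h2 x - p2 x))"
    by (simp add: algebra_simps)
  also have "\<dots> \<le> 2 * sqnorm_L2 (\<lambda>x. h1 x - p1 x) + 2 * sqnorm_L2 (\<lambda>x. h2 x - p2 x)"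
    by (intro sqnorm_L2_add_le bounded_borel_diff h1 h2 bounded_borel_Pg p1 p2)
  also have "\<dots> < \<epsilon>"
    using p1 p2 by simp
  finally have "sqnorm_L2 (\<lambda>x. h1 x + h2 x - (p1 x + p2 x)) < \<epsilon>" .
  with Pg_add[OF p1(1) p2(1)] show "\<exists>p\<in>Pg a b g. sqnorm_L2 (\<lambda>x. h1 x + h2 x - p x) < \<epsilon>"
    by (intro bexI[of _ "\<lambda>x. p1 x + p2 x"])
qed

lemma in_L2_closure_cmult:
  assumes h: "bounded_borel h" "in_L2_closure_Pg a b g h"
  shows "in_L2_closure_Pg a b g (\<lambda>x. k * h x)"
proof (cases "k = 0")
  case True
  then show ?thesis
    using in_L2_closure_Pg_Pg[OF Pg_zero] by simp
next
  case False
  show ?thesis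
    unfolding in_L2_closure_iff[OF bounded_borel_cmult[OF h(1)]]
  proof (intro allI impI)
    fix \<epsilon> :: real assume "0 < \<epsilon>"
    then have "0 < \<epsilon> / k\<^sup>2"
      using False by simp
    then obtain p where p: "p \<in> Pg a b g" "sqnorm_L2 (\<lambda>x. h x - p x) < \<epsilon> / k\<^sup>2"
      using h(2) unfolding in_L2_closure_iff[OF h(1)] by blast
    have "sqnorm_L2 (\<lambda>x. k * h x - k * p x) = k\<^sup>2 * sqnorm_L2 (\<lambda>x. h x - p x)"
      using sqnorm_L2_cmult[of k "\<lambda>x. h x - p x"] by (simp add: algebra_simps)
    also have "\<dots> < \<epsilon>"
      using p(2) False by (simp add: field_simps)
    finally have "sqnorm_L2 (\<lambda>x. k * h x - k * p x) < \<epsilon>" .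
    with Pg_cmult[OF p(1)] show "\<exists>p\<in>Pg a b g. sqnorm_L2 (\<lambda>x. k * h x - p x) < \<epsilon>"
      by (intro bexI[of _ "\<lambda>x. k * p x"])
  qed
qed

lemma in_L2_closure_sum:
  "finite S \<Longrightarrow> (\<And>i. i \<in> S \<Longrightarrow> bounded_borel (h i) \<and> in_L2_closure_Pg a b g (h i)) \<Longrightarrow>
    in_L2_closure_Pg a b g (\<lambda>x. \<Sum>i\<in>S. h i x)"
proof (induction S rule: finite_induct)
  case empty
  then show ?case using in_L2_closure_Pg_Pg[OF Pg_zero] by simp
next
  case (insert i S)
  then show ?case
    by (simp add: in_L2_closure_add bounded_borel_sum)
qed

lemma in_L2_closure_if_unif:
  assumes h: "bounded_borel h" "in_unif_closure_Pg a b g h"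
  shows "in_L2_closure_Pg a b g h"
  unfolding in_L2_closure_iff[OF h(1)]
proof (intro allI impI)
  fix \<epsilon> :: real assume "0 < \<epsilon>"
  obtain \<delta> where \<delta>: "0 < \<delta>" "\<delta>\<^sup>2 * (g b - g a) < \<epsilon>"
    using exists_sq_mult_less[OF \<open>0 < \<epsilon>\<close>, of "g b - g a"] le g_mono[of a b] by auto
  obtain p where p: "p \<in> Pg a b g" "\<forall>x\<in>{a..b}. \<bar>h x - p x\<bar> < \<delta>"
    using h(2) \<delta>(1) unfolding in_unif_closure_Pg_def by blast
  have "\<bar>h x - p x\<bar> \<le> \<delta>" if "x \<in> {a..<b}" for x
    using p(2) that by (simp add: less_imp_le)
  then have "sqnorm_L2 (\<lambda>x. h x - p x) \<le> \<delta>\<^sup>2 * (g b - g a)"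
    by (intro sqnorm_L2_le_uniform bounded_borel_diff h(1) bounded_borel_Pg p(1))
  with \<delta>(2) p(1) show "\<exists>p\<in>Pg a b g. sqnorm_L2 (\<lambda>x. h x - p x) < \<epsilon>"
    by (intro bexI[of _ p]) auto
qed

text \<open>Integrate AM-GM, \<open>\<bar>u\<bar> \<le> u\<^sup>2 / (2\<rho>) + \<rho> / 2\<close>, over \<open>[a,x)\<close>.\<close>

lemma abs_oriented_integral_le_sqnorm_L2:
  assumes u: "bounded_borel u" and "0 < \<rho>" and x: "x \<in> {a..b}"
  shows "\<bar>oriented_integral M a u x\<bar> \<le> sqnorm_L2 u / (2 * \<rho>) + \<rho> * (g b - g a) / 2"
proof -
  have i1: "integrable M (\<lambda>y. indicator {a..<x} y * u y)"
    using set_integrable_bounded_borel[OF u, of "{a..<x}"] by (simp add: set_integrable_def)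
  have i2: "integrable M (\<lambda>y. (u y)\<^sup>2 * indicator {a..<b} y)"
    by (rule integrable_sq_indicator[OF u])
  have i3: "integrable M (\<lambda>y. indicator {a..<b} y :: real)"
    by (intro integrable_bounded_borel bounded_borel_indicator) auto
  have amgm: "\<bar>v\<bar> \<le> (1 / (2 * \<rho>)) * v\<^sup>2 + \<rho> / 2" for v :: real
  proof -
    have "0 \<le> (\<bar>v\<bar> - \<rho>)\<^sup>2" by simp
    then have "2 * \<rho> * \<bar>v\<bar> \<le> v\<^sup>2 + \<rho>\<^sup>2"
      by (simp add: power2_eq_square algebra_simps)
    then show ?thesis
      using \<open>0 < \<rho>\<close> by (simp add: field_simps power2_eq_square)
  qed
  have "\<bar>oriented_integral M a u x\<bar> = \<bar>\<integral>y. indicator {a..<x} y * u y \<partial>M\<bar>"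
    using x by (simp add: oriented_integral_forward set_lebesgue_integral_def)
  also have "\<dots> \<le> \<integral>y. \<bar>indicator {a..<x} y * u y\<bar> \<partial>M"
    by (rule integral_abs_bound)
  also have "\<dots> \<le> \<integral>y. (1 / (2 * \<rho>)) * ((u y)\<^sup>2 * indicator {a..<b} y) + (\<rho> / 2) * indicator {a..<b} y \<partial>M"
    using i1 i2 i3 amgm x \<open>0 < \<rho>\<close> by (intro integral_mono) (auto simp: indicator_def)
  also have "\<dots> = sqnorm_L2 u / (2 * \<rho>) + \<rho> * (g b - g a) / 2"
    using i2 i3 le by (simp add: sqnorm_L2_def M_is_borel measure_Ico_g)
  finally show ?thesis .
qed

lemma in_unif_closure_oriented_integral:
  assumes h: "bounded_borel h" "in_L2_closure_Pg a b g h"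
  shows "in_unif_closure_Pg a b g (oriented_integral M a h)"
  unfolding in_unif_closure_Pg_def
proof (intro allI impI)
  fix \<epsilon> :: real assume "0 < \<epsilon>"
  have T: "0 \<le> g b - g a"
    using le g_mono[of a b] by simp
  define \<rho> where "\<rho> = \<epsilon> / (g b - g a + 1)"
  have "0 < \<rho>"
    using \<open>0 < \<epsilon>\<close> T by (simp add: \<rho>_def)
  obtain p where p: "p \<in> Pg a b g" "sqnorm_L2 (\<lambda>x. h x - p x) < \<rho> * \<epsilon>"
    using h(2) \<open>0 < \<rho>\<close> \<open>0 < \<epsilon>\<close> unfolding in_L2_closure_iff[OF h(1)] by (meson mult_pos_pos)
  have "\<forall>x\<in>{a..b}. \<bar>oriented_integral M a h x - oriented_integral M a p x\<bar> < \<epsilon>"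
  proof
    fix x assume x: "x \<in> {a..b}"
    have "oriented_integral M a h x - oriented_integral M a p x = oriented_integral M a (\<lambda>y. h y - p y) x"
      using oriented_integral_diff[OF h(1) bounded_borel_Pg[OF p(1)]] by simp
    also have "\<bar>\<dots>\<bar> \<le> sqnorm_L2 (\<lambda>y. h y - p y) / (2 * \<rho>) + \<rho> * (g b - g a) / 2"
      by (rule abs_oriented_integral_le_sqnorm_L2[OF bounded_borel_diff[OF h(1) bounded_borel_Pg[OF p(1)]] \<open>0 < \<rho>\<close> x])
    also have "\<dots> < \<epsilon> / 2 + \<epsilon> / 2"
    proof (rule add_strict_mono)
      show "sqnorm_L2 (\<lambda>y. h y - p y) / (2 * \<rho>) < \<epsilon> / 2"
        using p(2) \<open>0 < \<rho>\<close> by (simp add: field_simps)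
      show "\<rho> * (g b - g a) / 2 < \<epsilon> / 2"
        using \<open>0 < \<epsilon>\<close> T by (simp add: \<rho>_def field_simps)
    qed
    finally show "\<bar>oriented_integral M a h x - oriented_integral M a p x\<bar> < \<epsilon>"
      by simp
  qed
  with oriented_integral_Pg[OF p(1)]
  show "\<exists>p\<in>Pg a b g. \<forall>x\<in>{a..b}. \<bar>oriented_integral M a h x - p x\<bar> < \<epsilon>"
    by (intro bexI[of _ "oriented_integral M a p"])
qed

end

section \<open>Density from the atoms\<close>

lemma uniformly_continuous_factor:
  fixes \<phi> f :: "'a \<Rightarrow> real"
  assumes uc: "\<forall>\<epsilon>>0. \<exists>\<delta>>0. \<forall>x\<in>S. \<forall>y\<in>S. \<bar>\<phi> x - \<phi> y\<bar> < \<delta> \<longrightarrow> \<bar>f x - f y\<bar> < \<epsilon>"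
  obtains \<Phi> where "uniformly_continuous_on (\<phi> ` S) \<Phi>" "\<And>x. x \<in> S \<Longrightarrow> f x = \<Phi> (\<phi> x)"
proof -
  define \<Phi> where "\<Phi> u = f (inv_into S \<phi> u)" for u
  have same: "f x = f y" if "x \<in> S" "y \<in> S" "\<phi> x = \<phi> y" for x y
  proof (rule ccontr)
    assume "f x \<noteq> f y"
    then obtain \<delta> where \<delta>: "0 < \<delta>"
      "\<forall>x'\<in>S. \<forall>y'\<in>S. \<bar>\<phi> x' - \<phi> y'\<bar> < \<delta> \<longrightarrow> \<bar>f x' - f y'\<bar> < \<bar>f x - f y\<bar>"
      using uc by (meson zero_less_abs_iff right_minus_eq)
    have "\<bar>\<phi> x - \<phi> y\<bar> < \<delta>"
      using that(3) \<delta>(1) by simp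
    with \<delta>(2) that(1,2) have "\<bar>f x - f y\<bar> < \<bar>f x - f y\<bar>"
      by blast
    then show False
      by simp
  qed
  have factor: "f x = \<Phi> (\<phi> x)" if "x \<in> S" for x
    unfolding \<Phi>_def using that by (intro same inv_into_into) (auto simp: f_inv_into_f)
  have "uniformly_continuous_on (\<phi> ` S) \<Phi>"
    unfolding uniformly_continuous_on_def
  proof (intro allI impI)
    fix e :: real assume "0 < e"
    then obtain \<delta> where \<delta>: "0 < \<delta>" "\<forall>x\<in>S. \<forall>y\<in>S. \<bar>\<phi> x - \<phi> y\<bar> < \<delta> \<longrightarrow> \<bar>f x - f y\<bar> < e"
      using uc by blast
    have "dist (\<Phi> (\<phi> y)) (\<Phi> (\<phi> x)) < e" if "x \<in> S" "y \<in> S" "dist (\<phi> y) (\<phi> x) < \<delta>" for x y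
      using \<delta>(2) that by (simp add: dist_real_def factor[symmetric])
    then show "\<exists>d>0. \<forall>u\<in>\<phi> ` S. \<forall>u'\<in>\<phi> ` S. dist u' u < d \<longrightarrow> dist (\<Phi> u') (\<Phi> u) < e"
      using \<delta>(1) by blast
  qed
  then show ?thesis
    using factor by (rule that)
qed

lemma sum_mult_indicator_singleton:
  "finite E \<Longrightarrow> (\<Sum>z\<in>E. d z * indicator {z} y) = (if y \<in> E then d y else (0 :: real))"
proof -
  assume "finite E"
  have "(\<Sum>z\<in>E. d z * indicator {z} y) = (\<Sum>z\<in>E. if y = z then d z else 0)"
    by (intro sum.cong) (auto simp: indicator_def)
  then show ?thesis
    using \<open>finite E\<close> by (simp add: sum.delta)
qed

locale derivator_atoms = derivator_setting +
  assumes atoms_in_L2_closure: "\<And>x. x \<in> Dg a b g \<Longrightarrow> in_L2_closure_Pg a b g (indicator {x} :: real \<Rightarrow> real)"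
begin

text \<open>Only finitely many atoms have mass \<open>\<ge> \<eta>\<close>; \<open>d\<close> agrees with a combination of their indicators up
  to an error \<open>\<le> C \<eta>\<close>.\<close>

lemma in_L2_closure_if_atomic:
  assumes d: "bounded_borel d" and C: "0 \<le> C" "\<And>y. y \<in> {a..<b} \<Longrightarrow> \<bar>d y\<bar> \<le> C * measure M {y}"
  shows "in_L2_closure_Pg a b g d"
proof (rule in_L2_closure_approx[OF d])
  fix \<epsilon> :: real assume "0 < \<epsilon>"
  obtain \<delta> where \<delta>: "0 < \<delta>" "\<delta>\<^sup>2 * (g b - g a) < \<epsilon>"
    using exists_sq_mult_less[OF \<open>0 < \<epsilon>\<close>, of "g b - g a"] le g_mono[of a b] by auto
  define \<eta> where "\<eta> = \<delta> / (C + 1)"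
  have "0 < \<eta>"
    using \<delta> C by (simp add: \<eta>_def)
  have "C * \<eta> \<le> \<delta>"
    using \<delta> C by (simp add: \<eta>_def field_simps)
  define E where "E = {s \<in> {a..<b}. \<eta> \<le> measure M {s}}"
  have "finite E"
    unfolding E_def using finite_atoms_ge[OF \<open>0 < \<eta>\<close>] by (rule rev_finite_subset) auto
  define v where "v y = (\<Sum>z\<in>E. d z * indicator {z} y)" for y
  have v_eq: "v y = (if y \<in> E then d y else 0)" for y
    unfolding v_def using \<open>finite E\<close> by (rule sum_mult_indicator_singleton)
  have v: "bounded_borel v"
    unfolding v_def using \<open>finite E\<close>
    by (intro bounded_borel_sum bounded_borel_cmult bounded_borel_indicator) auto
  have v_closed: "in_L2_closure_Pg a b g v"
    unfolding v_def using \<open>finite E\<close>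
  proof (rule in_L2_closure_sum)
    fix z assume "z \<in> E"
    then have "z \<in> Dg a b g"
      using \<open>0 < \<eta>\<close> by (auto simp: Dg_iff E_def)
    then show "bounded_borel (\<lambda>y. d z * indicator {z} y) \<and> in_L2_closure_Pg a b g (\<lambda>y. d z * indicator {z} y)"
      using atoms_in_L2_closure in_L2_closure_cmult[OF bounded_borel_indicator]
        bounded_borel_cmult[OF bounded_borel_indicator] by auto
  qed
  have "\<bar>d y - v y\<bar> \<le> C * \<eta>" if "y \<in> {a..<b}" for y
  proof (cases "y \<in> E")
    case True
    then show ?thesis
      using C \<open>0 < \<eta>\<close> by (simp add: v_eq)
  next
    case False
    then have "C * measure M {y} \<le> C * \<eta>"
      using that C by (intro mult_left_mono) (auto simp: E_def)
    then show ?thesis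
      using False C(2)[OF that] by (simp add: v_eq)
  qed
  then have "sqnorm_L2 (\<lambda>y. d y - v y) \<le> (C * \<eta>)\<^sup>2 * (g b - g a)"
    by (intro sqnorm_L2_le_uniform bounded_borel_diff d v)
  also have "\<dots> \<le> \<delta>\<^sup>2 * (g b - g a)"
    using \<open>C * \<eta> \<le> \<delta>\<close> C \<open>0 < \<eta>\<close> le g_mono[of a b] by (intro mult_right_mono power_mono) auto
  finally have "sqnorm_L2 (\<lambda>y. d y - v y) < \<epsilon>"
    using \<delta>(2) by linarith
  with v v_closed show "\<exists>v. bounded_borel v \<and> in_L2_closure_Pg a b g v \<and> sqnorm_L2 (\<lambda>y. d y - v y) < \<epsilon>"
    by blast
qed

lemma in_unif_closure_mass_power: "in_unif_closure_Pg a b g (\<lambda>x. measure M {a..<x} ^ n)"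
proof (induction n)
  case 0
  then show ?case
    using in_unif_closure_Pg_Pg[OF Pg_const[OF le]] by simp
next
  case (Suc m)
  define F where "F x = measure M {a..<x} ^ m" for x
  have F: "bounded_borel F"
    unfolding F_def by (intro bounded_borel_power bounded_borel_measure_Ico)
  have D: "bounded_borel (\<lambda>y. pow_density a m y - real (Suc m) * F y)"
    by (intro bounded_borel_diff bounded_borel_pow_density bounded_borel_cmult F)
  obtain C where C: "0 \<le> C" "\<And>y. a \<le> y \<Longrightarrow> \<bar>pow_density a m y - real (Suc m) * F y\<bar> \<le> C * measure M {y}"
    using pow_density_atom_bound[of a m] unfolding F_def by blast
  have "in_L2_closure_Pg a b g (\<lambda>y. real (Suc m) * F y + (pow_density a m y - real (Suc m) * F y))"
  proof (rule in_L2_closure_add)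
    show "in_L2_closure_Pg a b g (\<lambda>y. real (Suc m) * F y)"
      using Suc F unfolding F_def by (intro in_L2_closure_cmult in_L2_closure_if_unif)
    show "in_L2_closure_Pg a b g (\<lambda>y. pow_density a m y - real (Suc m) * F y)"
      using C by (intro in_L2_closure_if_atomic[OF D]) auto
  qed (use F D in \<open>auto intro: bounded_borel_cmult\<close>)
  then have "in_unif_closure_Pg a b g (oriented_integral M a (pow_density a m))"
    by (intro in_unif_closure_oriented_integral bounded_borel_pow_density) simp
  then show ?case
  proof (rule in_unif_closure_Pg_cong)
    fix x assume "x \<in> {a..b}"
    then show "oriented_integral M a (pow_density a m) x = measure M {a..<x} ^ Suc m"
      by (simp add: power_measure_Ico_eq_oriented_integral del: power_Suc)
  qed
qed

lemma in_unif_closure_mass_polynomial: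
  "in_unif_closure_Pg a b g (\<lambda>x. \<Sum>i\<le>n. c i * measure M {a..<x} ^ i)"
  by (intro in_unif_closure_Pg_sum in_unif_closure_Pg_cmult in_unif_closure_mass_power) auto

lemma in_unif_closure_continuous_comp:
  assumes K: "compact K" "\<And>x. x \<in> {a..b} \<Longrightarrow> measure M {a..<x} \<in> K" and F: "continuous_on K F"
  shows "in_unif_closure_Pg a b g (\<lambda>x. F (measure M {a..<x}))"
  unfolding in_unif_closure_Pg_def
proof (intro allI impI)
  fix \<epsilon> :: real assume "0 < \<epsilon>"
  then obtain P where P: "polynomial_function P" "\<forall>u\<in>K. norm (F u - P u) < \<epsilon> / 2"
    using Stone_Weierstrass_polynomial_function[OF K(1) F, of "\<epsilon> / 2"] by auto
  obtain c n where Pc: "P = (\<lambda>u. \<Sum>i\<le>n. c i * u ^ i)"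
    using P(1) unfolding real_polynomial_function_eq[symmetric] real_polynomial_function_iff_sum by blast
  obtain p where p: "p \<in> Pg a b g" "\<forall>x\<in>{a..b}. \<bar>(\<Sum>i\<le>n. c i * measure M {a..<x} ^ i) - p x\<bar> < \<epsilon> / 2"
    using in_unif_closure_mass_polynomial[of c n] \<open>0 < \<epsilon>\<close> unfolding in_unif_closure_Pg_def
    by (meson half_gt_zero)
  have "\<forall>x\<in>{a..b}. \<bar>F (measure M {a..<x}) - p x\<bar> < \<epsilon>"
  proof
    fix x assume x: "x \<in> {a..b}"
    then have "\<bar>F (measure M {a..<x}) - P (measure M {a..<x})\<bar> < \<epsilon> / 2"
      using P(2) K(2) by auto
    moreover have "\<bar>P (measure M {a..<x}) - p x\<bar> < \<epsilon> / 2"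
      using p(2) x Pc by auto
    ultimately show "\<bar>F (measure M {a..<x}) - p x\<bar> < \<epsilon>"
      by linarith
  qed
  with p(1) show "\<exists>p\<in>Pg a b g. \<forall>x\<in>{a..b}. \<bar>F (measure M {a..<x}) - p x\<bar> < \<epsilon>"
    by (intro bexI[of _ p])
qed

lemma in_unif_closure_UCg:
  assumes f: "f \<in> (UCg a b g :: (real \<Rightarrow> real) set)"
  shows "in_unif_closure_Pg a b g f"
proof -
  define \<phi> where "\<phi> x = measure M {a..<x}" for x
  have "\<phi> x - \<phi> y = g x - g y" if "x \<in> {a..b}" "y \<in> {a..b}" for x y
    using that le by (simp add: \<phi>_def measure_Ico_g)
  then have "\<forall>\<epsilon>>0. \<exists>\<delta>>0. \<forall>x\<in>{a..b}. \<forall>y\<in>{a..b}. \<bar>\<phi> x - \<phi> y\<bar> < \<delta> \<longrightarrow> \<bar>f x - f y\<bar> < \<epsilon>"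
    using f unfolding UCg_def by simp
  then obtain \<Phi> where \<Phi>: "uniformly_continuous_on (\<phi> ` {a..b}) \<Phi>" "\<And>x. x \<in> {a..b} \<Longrightarrow> f x = \<Phi> (\<phi> x)"
    using uniformly_continuous_factor by blast
  obtain \<Phi>' where \<Phi>': "uniformly_continuous_on (closure (\<phi> ` {a..b})) \<Phi>'"
    "\<And>u. u \<in> \<phi> ` {a..b} \<Longrightarrow> \<Phi> u = \<Phi>' u"
    using uniformly_continuous_on_extension_on_closure[OF \<Phi>(1)] by metis
  have "bounded (\<phi> ` {a..b})"
    unfolding bounded_iff \<phi>_def by (intro exI[of _ "measure M (space M)"]) (auto intro: bounded_measure)
  then have "compact (closure (\<phi> ` {a..b}))"
    by (simp add: compact_closure)
  moreover have "\<phi> x \<in> closure (\<phi> ` {a..b})" if "x \<in> {a..b}" for x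
    using closure_subset imageI[OF that] by (rule subsetD)
  moreover have "continuous_on (closure (\<phi> ` {a..b})) \<Phi>'"
    by (rule uniformly_continuous_imp_continuous[OF \<Phi>'(1)])
  ultimately have "in_unif_closure_Pg a b g (\<lambda>x. \<Phi>' (measure M {a..<x}))"
    unfolding \<phi>_def by (rule in_unif_closure_continuous_comp)
  then show ?thesis
    by (rule in_unif_closure_Pg_cong) (simp add: \<Phi>(2) \<Phi>'(2) \<phi>_def)
qed

lemma Pg_dense_UCg_real: "Pg_dense_UCg a b g TYPE(real)"
  unfolding Pg_dense_UCg_def
proof (intro ballI allI impI)
  fix f :: "real \<Rightarrow> real" and \<epsilon> :: real
  assume "f \<in> UCg a b g" "0 < \<epsilon>"
  then obtain p where p: "p \<in> Pg a b g" "\<forall>x\<in>{a..b}. \<bar>f x - p x\<bar> < \<epsilon> / 2"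
    using in_unif_closure_UCg unfolding in_unif_closure_Pg_def by (meson half_gt_zero)
  have "(SUP x\<in>{a..b}. ereal (norm (f x - p x))) \<le> ereal (\<epsilon> / 2)"
    using p(2) by (intro SUP_least) (auto simp: less_imp_le)
  also have "\<dots> < ereal \<epsilon>"
    using \<open>0 < \<epsilon>\<close> by simp
  finally show "\<exists>p\<in>Pg a b g. (SUP x\<in>{a..b}. ereal (norm (f x - p x))) < ereal \<epsilon>"
    using p(1) by (intro bexI[of _ p])
qed

end

section \<open>Complex functions and the atoms from density\<close>

lemma SUP_norm_less:
  assumes "\<And>x. x \<in> A \<Longrightarrow> norm (h x) \<le> c" "c < \<epsilon>"
  shows "(SUP x\<in>A. ereal (norm (h x))) < ereal \<epsilon>"
proof -
  have "(SUP x\<in>A. ereal (norm (h x))) \<le> ereal c"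
    using assms(1) by (intro SUP_least) auto
  also have "\<dots> < ereal \<epsilon>"
    using assms(2) by simp
  finally show ?thesis .
qed

lemma UCg_comp_contraction:
  fixes f :: "real \<Rightarrow> 'f::real_normed_field" and \<phi> :: "'f \<Rightarrow> 'g::real_normed_field"
  assumes f: "f \<in> UCg a b g" and \<phi>: "\<And>u v. norm (\<phi> u - \<phi> v) \<le> norm (u - v)"
  shows "(\<lambda>x. \<phi> (f x)) \<in> UCg a b g"
  unfolding UCg_def
proof (intro CollectI allI impI)
  fix \<epsilon> :: real assume "0 < \<epsilon>"
  then obtain \<delta> where "0 < \<delta>" "\<forall>x\<in>{a..b}. \<forall>y\<in>{a..b}. \<bar>g x - g y\<bar> < \<delta> \<longrightarrow> norm (f x - f y) < \<epsilon>"
    using f unfolding UCg_def by blast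
  then show "\<exists>\<delta>>0. \<forall>x\<in>{a..b}. \<forall>y\<in>{a..b}. \<bar>g x - g y\<bar> < \<delta> \<longrightarrow> norm (\<phi> (f x) - \<phi> (f y)) < \<epsilon>"
    using \<phi> order_le_less_trans by blast
qed

lemma in_L2_closure_Pg_indicator_Re:
  assumes "in_L2_closure_Pg a b g (\<lambda>t. indicator {x} t :: complex)"
  shows "in_L2_closure_Pg a b g (\<lambda>t. indicator {x} t :: real)"
  unfolding in_L2_closure_Pg_def
proof (intro allI impI)
  fix \<epsilon> :: real assume "0 < \<epsilon>"
  then obtain p where p: "p \<in> (Pg a b g :: (real \<Rightarrow> complex) set)"
    "(\<integral>\<^sup>+ t. ennreal ((norm ((indicator {x} t :: complex) - p t))\<^sup>2 * indicator {a..<b} t) \<partial>LS_measure a b g)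
      < ennreal \<epsilon>"
    using assms unfolding in_L2_closure_Pg_def by blast
  have "norm ((indicator {x} t :: real) - Re (p t)) \<le> norm ((indicator {x} t :: complex) - p t)" for t
  proof -
    have "norm ((indicator {x} t :: real) - Re (p t)) = \<bar>Re ((indicator {x} t :: complex) - p t)\<bar>"
      by (simp add: indicator_def)
    also have "\<dots> \<le> norm ((indicator {x} t :: complex) - p t)"
      by (rule abs_Re_le_cmod)
    finally show ?thesis .
  qed
  then have "(\<integral>\<^sup>+ t. ennreal ((norm ((indicator {x} t :: real) - Re (p t)))\<^sup>2 * indicator {a..<b} t) \<partial>LS_measure a b g)
      \<le> (\<integral>\<^sup>+ t. ennreal ((norm ((indicator {x} t :: complex) - p t))\<^sup>2 * indicator {a..<b} t) \<partial>LS_measure a b g)"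
    by (intro nn_integral_mono ennreal_leI mult_right_mono power_mono) auto
  with p(2) Pg_Re[OF p(1)]
  show "\<exists>p\<in>Pg a b g. (\<integral>\<^sup>+ t. ennreal ((norm ((indicator {x} t :: real) - p t))\<^sup>2 * indicator {a..<b} t)
      \<partial>LS_measure a b g) < ennreal \<epsilon>"
    by (intro bexI[of _ "\<lambda>t. Re (p t)"]) auto
qed

context derivator_atoms
begin

lemma Pg_dense_UCg_complex: "Pg_dense_UCg a b g TYPE(complex)"
  unfolding Pg_dense_UCg_def
proof (intro ballI allI impI)
  fix f :: "real \<Rightarrow> complex" and \<epsilon> :: real
  assume f: "f \<in> UCg a b g" and "0 < \<epsilon>"
  then have "0 < \<epsilon> / 4" by simp
  have Re: "norm (Re u - Re v) \<le> norm (u - v)" and Im: "norm (Im u - Im v) \<le> norm (u - v)" for u v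
    using abs_Re_le_cmod[of "u - v"] abs_Im_le_cmod[of "u - v"] by simp_all
  have "in_unif_closure_Pg a b g (\<lambda>x. Re (f x))" "in_unif_closure_Pg a b g (\<lambda>x. Im (f x))"
    by (rule in_unif_closure_UCg[OF UCg_comp_contraction[OF f Re]]
        in_unif_closure_UCg[OF UCg_comp_contraction[OF f Im]])+
  then obtain p1 p2 where p1: "p1 \<in> Pg a b g" "\<forall>x\<in>{a..b}. \<bar>Re (f x) - p1 x\<bar> < \<epsilon> / 4"
    and p2: "p2 \<in> Pg a b g" "\<forall>x\<in>{a..b}. \<bar>Im (f x) - p2 x\<bar> < \<epsilon> / 4"
    using \<open>0 < \<epsilon> / 4\<close> unfolding in_unif_closure_Pg_def by blast
  define P where "P x = complex_of_real (p1 x) + \<i> * complex_of_real (p2 x)" for x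
  have "P \<in> Pg a b g"
    unfolding P_def by (intro Pg_add Pg_of_real p1(1) Pg_cmult p2(1))
  moreover have "(SUP x\<in>{a..b}. ereal (norm (f x - P x))) < ereal \<epsilon>"
  proof (rule SUP_norm_less)
    fix x assume x: "x \<in> {a..b}"
    have "norm (f x - P x) \<le> \<bar>Re (f x - P x)\<bar> + \<bar>Im (f x - P x)\<bar>"
      by (rule cmod_le)
    also have "\<dots> = \<bar>Re (f x) - p1 x\<bar> + \<bar>Im (f x) - p2 x\<bar>"
      by (simp add: P_def)
    also have "\<dots> \<le> \<epsilon> / 2"
      using p1(2) p2(2) x by fastforce
    finally show "norm (f x - P x) \<le> \<epsilon> / 2" .
  qed (use \<open>0 < \<epsilon>\<close> in simp)
  ultimately show "\<exists>p\<in>Pg a b g. (SUP x\<in>{a..b}. ereal (norm (f x - p x))) < ereal \<epsilon>"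
    by (intro bexI[of _ P])
qed

end

context derivator_setting
begin

lemma Pg_dense_UCg_if_atoms_in_L2_closure:
  assumes "\<forall>x\<in>Dg a b g. in_L2_closure_Pg a b g (\<lambda>t. indicator {x} t :: real)"
  shows "Pg_dense_UCg a b g TYPE(real)" "Pg_dense_UCg a b g TYPE(complex)"
proof -
  interpret derivator_atoms a b g
    using assms by unfold_locales auto
  show "Pg_dense_UCg a b g TYPE(real)" "Pg_dense_UCg a b g TYPE(complex)"
    by (rule Pg_dense_UCg_real Pg_dense_UCg_complex)+
qed

definition atom_tent :: "real \<Rightarrow> real \<Rightarrow> real \<Rightarrow> real" where
  "atom_tent x \<eta> y = (if y \<le> x then max 0 (1 - (g x - g y) / \<eta>) else 0)"

lemma measure_atom_le_g_diff:
  assumes "y \<in> {a..b}" "z \<in> {a..b}" "y \<le> x" "x < z"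
  shows "measure M {x} \<le> g z - g y"
proof -
  have "measure M {x} \<le> measure M {y..<z}"
    using assms by (intro finite_measure_mono) (auto simp: M_is_borel)
  also have "\<dots> = g z - g y"
    using assms by (simp add: measure_Ico_g)
  finally show ?thesis .
qed

lemma abs_atom_tent_diff_le:
  assumes "y \<le> x" "z \<le> x" "0 < \<eta>"
  shows "\<bar>atom_tent x \<eta> y - atom_tent x \<eta> z\<bar> \<le> \<bar>g y - g z\<bar> / \<eta>"
proof -
  have max_lip: "\<bar>max 0 p - max 0 q\<bar> \<le> \<bar>p - q\<bar>" for p q :: real
    by (simp add: max_def abs_if)
  have "\<bar>atom_tent x \<eta> y - atom_tent x \<eta> z\<bar> \<le> \<bar>(1 - (g x - g y) / \<eta>) - (1 - (g x - g z) / \<eta>)\<bar>"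
    using assms unfolding atom_tent_def by (simp add: max_lip)
  also have "(1 - (g x - g y) / \<eta>) - (1 - (g x - g z) / \<eta>) = (g y - g z) / \<eta>"
    using \<open>0 < \<eta>\<close> by (simp add: field_simps)
  also have "\<bar>(g y - g z) / \<eta>\<bar> = \<bar>g y - g z\<bar> / \<eta>"
    using \<open>0 < \<eta>\<close> by simp
  finally show ?thesis .
qed

lemma atom_tent_UCg:
  assumes x: "x \<in> Dg a b g" and "0 < \<eta>"
  shows "(\<lambda>y. of_real (atom_tent x \<eta> y) :: 'f::real_normed_field) \<in> UCg a b g"
  unfolding UCg_def
proof (intro CollectI allI impI)
  fix e :: real assume "0 < e"
  have "0 < measure M {x}"
    using x by (simp add: Dg_iff)
  have "\<bar>atom_tent x \<eta> y - atom_tent x \<eta> z\<bar> < e"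
    if yz: "y \<in> {a..b}" "z \<in> {a..b}" "\<bar>g y - g z\<bar> < min (measure M {x}) (\<eta> * e)" for y z
  proof -
    consider "y \<le> x" "z \<le> x" | "y \<le> x" "x < z" | "x < y" "z \<le> x" | "x < y" "x < z"
      by linarith
    then show ?thesis
    proof cases
      case 1
      then have "\<bar>atom_tent x \<eta> y - atom_tent x \<eta> z\<bar> \<le> \<bar>g y - g z\<bar> / \<eta>"
        using \<open>0 < \<eta>\<close> by (rule abs_atom_tent_diff_le)
      also have "\<dots> < e"
        using yz(3) \<open>0 < \<eta>\<close> by (simp add: field_simps)
      finally show ?thesis .
    next
      case 2
      then have "measure M {x} \<le> \<bar>g y - g z\<bar>"
        using measure_atom_le_g_diff[of y z x] yz(1,2) by (simp add: abs_if)
      with yz(3) show ?thesis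
        by simp
    next
      case 3
      then have "measure M {x} \<le> \<bar>g y - g z\<bar>"
        using measure_atom_le_g_diff[of z y x] yz(1,2) by (simp add: abs_if)
      with yz(3) show ?thesis
        by simp
    next
      case 4
      then show ?thesis
        using \<open>0 < e\<close> by (simp add: atom_tent_def)
    qed
  qed
  then show "\<exists>\<delta>>0. \<forall>y\<in>{a..b}. \<forall>z\<in>{a..b}. \<bar>g y - g z\<bar> < \<delta> \<longrightarrow>
      norm (of_real (atom_tent x \<eta> y) - (of_real (atom_tent x \<eta> z) :: 'f)) < e"
    using \<open>0 < measure M {x}\<close> \<open>0 < \<eta>\<close> \<open>0 < e\<close>
    by (intro exI[of _ "min (measure M {x}) (\<eta> * e)"]) (simp flip: of_real_diff)
qed

lemma norm_indicator_minus_atom_tent: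
  assumes "x \<in> {a..<b}" "y \<in> {a..<b}" "0 < \<eta>"
  shows "norm ((indicator {x} y :: 'f::real_normed_field) - of_real (atom_tent x \<eta> y))
    \<le> indicator {z \<in> {a..<x}. measure M {z..<x} < \<eta>} y"
proof -
  have "(indicator {x} y :: 'f) = of_real (indicator {x} y)"
    by (simp add: indicator_def)
  then have "norm ((indicator {x} y :: 'f) - of_real (atom_tent x \<eta> y)) = \<bar>indicator {x} y - atom_tent x \<eta> y\<bar>"
    by (metis norm_of_real of_real_diff)
  also have "\<dots> \<le> indicator {z \<in> {a..<x}. measure M {z..<x} < \<eta>} y"
  proof -
    consider "y = x" | "x < y" | "y < x"
      by linarith
    then show ?thesis
    proof cases
      case 3
      then have "measure M {y..<x} = g x - g y" "g y \<le> g x"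
        using assms by (simp_all add: measure_Ico_g g_mono)
      then show ?thesis
        using 3 assms by (auto simp: atom_tent_def indicator_def field_simps)
    qed (auto simp: atom_tent_def)
  qed
  finally show ?thesis .
qed

lemma nn_integral_sq_le:
  fixes h :: "real \<Rightarrow> 'f::real_normed_vector"
  assumes E: "E \<in> sets borel" "E \<subseteq> {a..<b}"
    and bound: "\<And>y. y \<in> {a..<b} \<Longrightarrow> norm (h y) \<le> indicator E y + \<delta>"
  shows "(\<integral>\<^sup>+ y. ennreal ((norm (h y))\<^sup>2 * indicator {a..<b} y) \<partial>M)
    \<le> ennreal (2 * measure M E + 2 * \<delta>\<^sup>2 * (g b - g a))"
proof -
  have pointwise: "(norm (h y))\<^sup>2 * indicator {a..<b} y \<le> 2 * indicator E y + 2 * \<delta>\<^sup>2 * indicator {a..<b} y" for y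
  proof (cases "y \<in> {a..<b}")
    case True
    then have "(norm (h y))\<^sup>2 \<le> (indicator E y + \<delta>)\<^sup>2"
      using bound by (intro power_mono) auto
    also have "\<dots> \<le> 2 * (indicator E y)\<^sup>2 + 2 * \<delta>\<^sup>2"
      using sum_squares_ge_zero[of "indicator E y - \<delta>" 0] by (simp add: power2_eq_square algebra_simps)
    also have "(indicator E y :: real)\<^sup>2 = indicator E y"
      by (simp add: indicator_def)
    finally show ?thesis
      using True by simp
  qed (use E in \<open>auto simp: indicator_def\<close>)
  have "bounded_borel (\<lambda>y. 2 * indicator E y + 2 * \<delta>\<^sup>2 * indicator {a..<b} y)"
    using E by (intro bounded_borel_add bounded_borel_cmult bounded_borel_indicator) auto
  then have "(\<integral>\<^sup>+ y. ennreal (2 * indicator E y + 2 * \<delta>\<^sup>2 * indicator {a..<b} y) \<partial>M)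
      = ennreal (\<integral>y. 2 * indicator E y + 2 * \<delta>\<^sup>2 * indicator {a..<b} y \<partial>M)"
    by (intro nn_integral_eq_integral integrable_bounded_borel) (auto simp: indicator_def)
  also have "(\<integral>y. 2 * indicator E y + 2 * \<delta>\<^sup>2 * indicator {a..<b} y \<partial>M) = 2 * measure M E + 2 * \<delta>\<^sup>2 * (g b - g a)"
    using E le integrable_bounded_borel[OF bounded_borel_indicator[OF E(1)]]
      integrable_bounded_borel[OF bounded_borel_indicator[of "{a..<b}"]]
    by (simp add: M_is_borel measure_Ico_g)
  finally show ?thesis
    using pointwise by (metis (no_types, lifting) ennreal_leI nn_integral_mono)
qed

lemma in_L2_closure_atom_if_dense:
  assumes dense: "Pg_dense_UCg a b g TYPE('f::real_normed_field)" and x: "x \<in> Dg a b g"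
  shows "in_L2_closure_Pg a b g (\<lambda>t. indicator {x} t :: 'f)"
  unfolding in_L2_closure_Pg_def
proof (intro allI impI)
  fix \<epsilon> :: real assume "0 < \<epsilon>"
  have "x \<in> {a..<b}"
    using x by (simp add: Dg_iff)
  define \<eta> where "\<eta> = \<epsilon> / 4"
  have "0 < \<eta>"
    using \<open>0 < \<epsilon>\<close> by (simp add: \<eta>_def)
  obtain \<delta> where \<delta>: "0 < \<delta>" "\<delta>\<^sup>2 * (g b - g a) < \<epsilon> / 4"
    using exists_sq_mult_less[of "\<epsilon> / 4" "g b - g a"] \<open>0 < \<epsilon>\<close> le g_mono[of a b] by auto
  define F where "F y = (of_real (atom_tent x \<eta> y) :: 'f)" for y
  define E where "E = {z \<in> {a..<x}. measure M {z..<x} < \<eta>}"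
  have E_borel: "E \<in> sets borel"
    unfolding E_def by (rule sets_near_left)
  have "F \<in> UCg a b g"
    unfolding F_def by (rule atom_tent_UCg[OF x \<open>0 < \<eta>\<close>])
  with dense have "\<exists>p\<in>Pg a b g. (SUP y\<in>{a..b}. ereal (norm (F y - p y))) < ereal \<delta>"
    using \<delta>(1) unfolding Pg_dense_UCg_def by (elim ballE allE impE) auto
  then obtain p where p: "p \<in> Pg a b g" "(SUP y\<in>{a..b}. ereal (norm (F y - p y))) < ereal \<delta>"
    by (elim bexE)
  have "norm ((indicator {x} y :: 'f) - p y) \<le> indicator E y + \<delta>" if y: "y \<in> {a..<b}" for y
  proof -
    have "norm (F y - p y) < \<delta>"
      using le_less_trans[OF SUP_upper p(2)] y by auto
    moreover have "norm ((indicator {x} y :: 'f) - F y) \<le> indicator E y"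
      unfolding F_def E_def using \<open>x \<in> {a..<b}\<close> y \<open>0 < \<eta>\<close> by (rule norm_indicator_minus_atom_tent)
    ultimately show ?thesis
      using norm_triangle_ineq[of "(indicator {x} y :: 'f) - F y" "F y - p y"] by simp
  qed
  then have "(\<integral>\<^sup>+ y. ennreal ((norm ((indicator {x} y :: 'f) - p y))\<^sup>2 * indicator {a..<b} y) \<partial>M)
      \<le> ennreal (2 * measure M E + 2 * \<delta>\<^sup>2 * (g b - g a))"
    using \<open>x \<in> {a..<b}\<close> by (intro nn_integral_sq_le E_borel) (auto simp: E_def)
  also have "\<dots> < ennreal \<epsilon>"
    using measure_near_left_le[OF \<open>0 < \<eta>\<close>, of a x] \<delta>(2) \<open>0 < \<epsilon>\<close>
    by (intro ennreal_lessI) (auto simp: E_def \<eta>_def)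
  finally show "\<exists>p\<in>Pg a b g. (\<integral>\<^sup>+ y. ennreal ((norm ((indicator {x} y :: 'f) - p y))\<^sup>2 * indicator {a..<b} y)
      \<partial>LS_measure a b g) < ennreal \<epsilon>"
    using p(1) by (intro bexI[of _ p])
qed

end

theorem mainTheorem8:
  fixes a b :: real and g :: "real \<Rightarrow> real"
  assumes "derivator a b g"
  shows "(Pg_dense_UCg a b g TYPE(real) \<longleftrightarrow>
            (\<forall>x\<in>Dg a b g. in_L2_closure_Pg a b g (\<lambda>t. indicator {x} t :: real)))
       \<and> (Pg_dense_UCg a b g TYPE(complex) \<longleftrightarrow>
            (\<forall>x\<in>Dg a b g. in_L2_closure_Pg a b g (\<lambda>t. indicator {x} t :: complex)))"
proof (cases "a \<le> b")
  case True
  interpret derivator_setting a b g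
    using assms True by unfold_locales
  show ?thesis
  proof (intro conjI iffI ballI)
    show "in_L2_closure_Pg a b g (\<lambda>t. indicator {x} t :: real)"
      if "Pg_dense_UCg a b g TYPE(real)" "x \<in> Dg a b g" for x
      using that by (rule in_L2_closure_atom_if_dense)
    show "in_L2_closure_Pg a b g (\<lambda>t. indicator {x} t :: complex)"
      if "Pg_dense_UCg a b g TYPE(complex)" "x \<in> Dg a b g" for x
      using that by (rule in_L2_closure_atom_if_dense)
    show "Pg_dense_UCg a b g TYPE(real)"
      if "\<forall>x\<in>Dg a b g. in_L2_closure_Pg a b g (\<lambda>t. indicator {x} t :: real)"
      using that by (rule Pg_dense_UCg_if_atoms_in_L2_closure(1))
    show "Pg_dense_UCg a b g TYPE(complex)"
      if "\<forall>x\<in>Dg a b g. in_L2_closure_Pg a b g (\<lambda>t. indicator {x} t :: complex)"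
      using that in_L2_closure_Pg_indicator_Re by (intro Pg_dense_UCg_if_atoms_in_L2_closure(2)) blast
  qed
next
  case False
  then have "Dg a b g = {}" "{a..b} = {}"
    by (auto simp: Dg_def)
  then show ?thesis
    unfolding Pg_dense_UCg_def by (auto intro!: bexI[of _ "\<lambda>x. 0"] Pg_zero simp: bot_ereal_def)
qed

end
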